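(* Let $\boldsymbol k$ be an algebraically closed field with $\operatorname{char}\boldsymbol k\neq 2$, let $V$ be a vector space over $\boldsymbol k$ of finite dimension $n\geqslant 2$, let $\mathcal M:=V^*\otimes V^*\otimes V$, and let $G:=\mathrm{GL}(V)$ act naturally on $\mathcal M$. Then there exist a set $\{f_i\}_{i\in I}$ of $n^3-n^2$ rational $G$-invariant functions on $\mathcal M$, algebraically independent over $\boldsymbol k$, and a finite set $\{h_j\}_{j\in J}$ of nonconstant polynomial functions on $\mathcal M$ such that: (i) for any points $a,b$ of the dense open subset $\{m\in\mathcal M\mid h_j(m)\neq 0\ \forall j\in J\}$ of $\mathcal M$, the conditions (a) $G\cdot a=G\cdot b$ and (b) $f_i(a)=f_i(b)$ for all $i\in I$ are equivalent; (ii) the set $\{f_i\}_{i\in I}$ generates the field $\boldsymbol k(\mathcal M)^G$ over $\boldsymbol k$. Moreover, if $n=1$, then $\boldsymbol k(\mathcal M)^G=\boldsymbol k$ and $\mathcal M\setminus\{0\}$ is a single $G$-orbit.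
   Context: $\boldsymbol k(\mathcal M)^G$ denotes the field of $G$-invariant rational functions on $\mathcal M$. Topological notions refer to the Zariski topology. *)

theory Defs
  imports "HOL-Computational_Algebra.Polynomial" "HOL-Library.Cardinality"
begin

definition alg_closed_field :: "'k::field itself \<Rightarrow> bool" where
  "alg_closed_field _ \<longleftrightarrow> (\<forall>p::'k poly. degree p \<ge> 1 \<longrightarrow> (\<exists>x. poly p x = 0))"

inductive poly_fun :: "'i set \<Rightarrow> (('i \<Rightarrow> 'k::comm_ring_1) \<Rightarrow> 'k) \<Rightarrow> bool" for S where
  pf_const: "poly_fun S (\<lambda>x. c)"
| pf_var: "i \<in> S \<Longrightarrow> poly_fun S (\<lambda>x. x i)"
| pf_add: "poly_fun S p \<Longrightarrow> poly_fun S q \<Longrightarrow> poly_fun S (\<lambda>x. p x + q x)"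
| pf_mult: "poly_fun S p \<Longrightarrow> poly_fun S q \<Longrightarrow> poly_fun S (\<lambda>x. p x * q x)"

text \<open>Points of M = V* (x) V* (x) V, with V = k^n (basis indexed by type 'n):
  a point T is given by its structure constants T(a,b,c) = T_{ab}^c.\<close>
type_synonym ('k,'n) tensor = "'n \<times> 'n \<times> 'n \<Rightarrow> 'k"

definition is_inverse :: "('n::finite \<Rightarrow> 'n \<Rightarrow> 'k::field) \<Rightarrow> ('n \<Rightarrow> 'n \<Rightarrow> 'k) \<Rightarrow> bool" where
  "is_inverse g h \<longleftrightarrow>
     (\<forall>i j. (\<Sum>k\<in>UNIV. g i k * h k j) = (if i = j then 1 else 0)) \<and>
     (\<forall>i j. (\<Sum>k\<in>UNIV. h i k * g k j) = (if i = j then 1 else 0))"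

definition GL :: "('n::finite \<Rightarrow> 'n \<Rightarrow> 'k::field) set" where
  "GL = {g. \<exists>h. is_inverse g h}"

definition mat_inv :: "('n::finite \<Rightarrow> 'n \<Rightarrow> 'k::field) \<Rightarrow> ('n \<Rightarrow> 'n \<Rightarrow> 'k)" where
  "mat_inv g = (SOME h. is_inverse g h)"

text \<open>Natural action: (g.T)(x,y) = g T(g^{-1} x, g^{-1} y), in coordinates.\<close>
definition act :: "('n::finite \<Rightarrow> 'n \<Rightarrow> 'k::field) \<Rightarrow> ('k,'n) tensor \<Rightarrow> ('k,'n) tensor" where
  "act g T = (\<lambda>(i,j,l). \<Sum>a\<in>UNIV. \<Sum>b\<in>UNIV. \<Sum>c\<in>UNIV.
      g l c * T (a,b,c) * mat_inv g a i * mat_inv g b j)"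

definition orbit :: "('k::field,'n::finite) tensor \<Rightarrow> ('k,'n) tensor set" where
  "orbit T = {act g T | g. g \<in> GL}"

text \<open>A rational function on M, represented as a quotient p/q of polynomial
  functions with q not identically zero.\<close>
definition is_ratfun :: "(('k::field,'n::finite) tensor \<Rightarrow> 'k) \<times> (('k,'n) tensor \<Rightarrow> 'k) \<Rightarrow> bool" where
  "is_ratfun f \<longleftrightarrow> poly_fun UNIV (fst f) \<and> poly_fun UNIV (snd f) \<and> (\<exists>m. snd f m \<noteq> 0)"

text \<open>G-invariance of p/q as an element of k(M): p(g.m)/q(g.m) = p(m)/q(m) as rational functions.\<close>
definition invariant_ratfun :: "(('k::field,'n::finite) tensor \<Rightarrow> 'k) \<times> (('k,'n) tensor \<Rightarrow> 'k) \<Rightarrow> bool" where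
  "invariant_ratfun f \<longleftrightarrow>
     (\<forall>g\<in>GL. \<forall>m. fst f (act g m) * snd f m = fst f m * snd f (act g m))"

end

theory Submission
  imports Defs "HOL-Analysis.Determinants"
begin

text \<open>View a tensor \<open>T\<close> as a bilinear product on \<open>V\<close>, let \<open>t(x) = tr T(x,-)\<close> and
  \<open>B(x,y) = t(T(x,y))\<close>. Where \<open>det B \<noteq> 0\<close> there is a unique \<open>w\<close> with \<open>B(w,-) = t\<close>, and
  \<open>w\<close> together with the Krylov vectors \<open>T(w,w), T(w,T(w,w)), \<dots>\<close> is equivariant. Where these
  \<open>n\<close> vectors form a basis, writing \<open>T\<close> in this basis gives a normal form that is constant
  exactly on the orbits, and whose entries are rational functions of \<open>T\<close> with a power of a single
  polynomial \<open>D\<close> as denominator. In a normal form, \<open>n\<^sup>2\<close> structure constants are determined by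
  the others; the remaining \<open>n\<^sup>3 - n\<^sup>2\<close> entries are the invariants. They separate the generic
  orbits; they are algebraically independent since every choice of them is realised by a normal
  form; and they generate the invariant field since an invariant rational function is
  determined by its restriction to the normal forms, moved by a fixed group element to a point
  where it is defined.

  For \<open>n = 1\<close>, \<open>g \<in> k\<^sup>*\<close> acts on \<open>M \<cong> k\<close> by \<open>T \<mapsto> T/g\<close>: there is a single nonzero orbit,
  and an invariant rational function is constant on the line.\<close>

lemma poly_fun_diff: "poly_fun S p \<Longrightarrow> poly_fun S q \<Longrightarrow> poly_fun S (\<lambda>x. p x - q x)"
proof -
  assume "poly_fun S p" "poly_fun S q"
  then have "poly_fun S (\<lambda>x. p x + (-1) * q x)" by (intro pf_add pf_mult pf_const)
  then show ?thesis by simp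
qed

lemma poly_fun_sum:
  "finite A \<Longrightarrow> (\<And>a. a \<in> A \<Longrightarrow> poly_fun S (f a)) \<Longrightarrow> poly_fun S (\<lambda>x. \<Sum>a\<in>A. f a x)"
  by (induction A rule: finite_induct) (auto intro: pf_add pf_const[of S 0, simplified])

lemma poly_fun_prod:
  "finite A \<Longrightarrow> (\<And>a. a \<in> A \<Longrightarrow> poly_fun S (f a)) \<Longrightarrow> poly_fun S (\<lambda>x. \<Prod>a\<in>A. f a x)"
  by (induction A rule: finite_induct) (auto intro: pf_mult pf_const[of S 1, simplified])

lemma poly_fun_power: "poly_fun S p \<Longrightarrow> poly_fun S (\<lambda>x. p x ^ k)"
  by (induction k) (auto intro: pf_mult pf_const[of S 1, simplified])

lemma poly_fun_cong: "poly_fun S p \<Longrightarrow> (\<And>i. i \<in> S \<Longrightarrow> x i = y i) \<Longrightarrow> p x = p y"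
  by (induction rule: poly_fun.induct) auto

lemma poly_fun_compose:
  "poly_fun S p \<Longrightarrow> (\<And>i. i \<in> S \<Longrightarrow> poly_fun S' (\<lambda>y. F y i)) \<Longrightarrow> poly_fun S' (\<lambda>y. p (F y))"
  by (induction rule: poly_fun.induct) (auto intro: pf_const pf_add pf_mult)

lemma poly_fun_det:
  fixes M :: "('x \<Rightarrow> 'k) \<Rightarrow> 'k::field^'n::finite^'n"
  assumes "\<And>i j. poly_fun S (\<lambda>T. M T $ i $ j)"
  shows "poly_fun S (\<lambda>T. det (M T))"
  unfolding det_def
  by (intro poly_fun_sum pf_mult poly_fun_prod pf_const assms) (simp_all add: finite_permutations)

lemma poly_fun_on_line: "poly_fun S p \<Longrightarrow> \<exists>q. \<forall>t. p (\<lambda>i. x i + t * v i) = poly q t"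
proof (induction rule: poly_fun.induct)
  case (pf_const c)
  show ?case by (rule exI[of _ "[:c:]"]) simp
next
  case (pf_var i)
  show ?case by (rule exI[of _ "[:x i, v i:]"]) (simp add: algebra_simps)
next
  case (pf_add p q)
  then obtain a b where "\<forall>t. p (\<lambda>i. x i + t * v i) = poly a t" "\<forall>t. q (\<lambda>i. x i + t * v i) = poly b t"
    by blast
  then show ?case by (intro exI[of _ "a + b"]) simp
next
  case (pf_mult p q)
  then obtain a b where "\<forall>t. p (\<lambda>i. x i + t * v i) = poly a t" "\<forall>t. q (\<lambda>i. x i + t * v i) = poly b t"
    by blast
  then show ?case by (intro exI[of _ "a * b"]) simp
qed

lemma alg_closed_field_infinite:
  assumes "alg_closed_field TYPE('k::field)"
  shows "infinite (UNIV :: 'k set)"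
proof
  assume fin: "finite (UNIV :: 'k set)"
  define p :: "'k poly" where "p = (\<Prod>a\<in>UNIV. [:-a, 1:]) + 1"
  have "degree (\<Prod>a\<in>UNIV. [:-a, (1::'k):]) = card (UNIV :: 'k set)"
    using fin by (simp add: degree_prod_eq_sum_degree)
  moreover have "card {0, 1::'k} \<le> card (UNIV::'k set)" using fin by (rule card_mono) simp
  ultimately have "degree p \<ge> 1" unfolding p_def by (simp add: degree_add_eq_left)
  then obtain x where "poly p x = 0" using assms unfolding alg_closed_field_def by blast
  moreover have "poly (\<Prod>a\<in>UNIV. [:-a, 1:]) x = 0"
    using fin by (simp add: poly_prod prod_zero_iff)
  ultimately show False unfolding p_def by simp
qed

text \<open>Restrict both functions to the line through the two witnesses: the product of the two
  restrictions is a nonzero univariate polynomial, so it has a non-root.\<close>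
lemma poly_fun_common_nonzero:
  fixes p q :: "('i \<Rightarrow> 'k::field) \<Rightarrow> 'k"
  assumes inf: "infinite (UNIV :: 'k set)"
    and "poly_fun S p" "poly_fun S q" "p x0 \<noteq> 0" "q x1 \<noteq> 0"
  shows "\<exists>x. p x \<noteq> 0 \<and> q x \<noteq> 0"
proof -
  obtain a where a: "\<forall>t. p (\<lambda>i. x0 i + t * (x1 i - x0 i)) = poly a t"
    using poly_fun_on_line[OF assms(2), of x0 "\<lambda>i. x1 i - x0 i"] by blast
  obtain b where b: "\<forall>t. q (\<lambda>i. x0 i + t * (x1 i - x0 i)) = poly b t"
    using poly_fun_on_line[OF assms(3), of x0 "\<lambda>i. x1 i - x0 i"] by blast
  have "a \<noteq> 0" using a[rule_format, of 0] assms(4) by auto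
  moreover have "b \<noteq> 0" using b[rule_format, of 1] assms(5) by auto
  ultimately have "finite {t. poly (a * b) t = 0}" by (intro poly_roots_finite) simp
  then obtain t where "poly (a * b) t \<noteq> 0" using inf
    by (metis (mono_tags, lifting) UNIV_I finite_subset mem_Collect_eq subsetI)
  then show ?thesis using a b by (intro exI[of _ "\<lambda>i. x0 i + t * (x1 i - x0 i)"]) auto
qed

section \<open>The action by matrices\<close>

lemma sum_rotate3:
  "(\<Sum>a\<in>A. \<Sum>b\<in>B. \<Sum>c\<in>C. f a b c) = (\<Sum>c\<in>C. \<Sum>a\<in>A. \<Sum>b\<in>B. f a b c)"
proof -
  have "(\<Sum>a\<in>A. \<Sum>b\<in>B. \<Sum>c\<in>C. f a b c) = (\<Sum>a\<in>A. \<Sum>c\<in>C. \<Sum>b\<in>B. f a b c)"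
    by (rule sum.cong[OF refl], rule sum.swap)
  also have "\<dots> = (\<Sum>c\<in>C. \<Sum>a\<in>A. \<Sum>b\<in>B. f a b c)" by (rule sum.swap)
  finally show ?thesis .
qed

lemma if_zero_mult: "(if P then a else 0) * x = (if P then a * x else (0::'a::mult_zero))"
  and mult_if_zero: "x * (if P then a else 0) = (if P then x * a else (0::'a::mult_zero))"
  by simp_all

definition mat_of_fun :: "('n::finite \<Rightarrow> 'n \<Rightarrow> 'k) \<Rightarrow> 'k^'n^'n" where
  "mat_of_fun g = (\<chi> i j. g i j)"

definition fun_of_mat :: "'k^'n::finite^'n \<Rightarrow> ('n \<Rightarrow> 'n \<Rightarrow> 'k)" where
  "fun_of_mat A = (\<lambda>i j. A$i$j)"

lemma mat_of_fun_of_mat [simp]: "mat_of_fun (fun_of_mat A) = A"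
  by (simp add: mat_of_fun_def fun_of_mat_def vec_eq_iff)

lemma mat_of_fun_nth [simp]: "mat_of_fun g $ i $ j = g i j"
  by (simp add: mat_of_fun_def)

definition tmul :: "('k::comm_ring_1,'n::finite) tensor \<Rightarrow> 'k^'n \<Rightarrow> 'k^'n \<Rightarrow> 'k^'n" where
  "tmul T x y = (\<chi> c. \<Sum>a\<in>UNIV. \<Sum>b\<in>UNIV. x$a * y$b * T(a,b,c))"

text \<open>The action of \<open>act g\<close> with the matrix of \<open>g\<close> and its inverse given separately; it is
  the action of \<open>G\<close> only when \<open>H = G\<^sup>-\<^sup>1\<close> (see \<open>inverse_mats\<close>).\<close>
definition act_mats :: "'k::comm_ring_1^'n::finite^'n \<Rightarrow> 'k^'n^'n \<Rightarrow> ('k,'n) tensor \<Rightarrow> ('k,'n) tensor" where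
  "act_mats G H T = (\<lambda>(i,j,l). \<Sum>a\<in>UNIV. \<Sum>b\<in>UNIV. \<Sum>c\<in>UNIV. G$l$c * T (a,b,c) * H$a$i * H$b$j)"

lemma act_eq_act_mats: "act g T = act_mats (mat_of_fun g) (mat_of_fun (mat_inv g)) T"
  by (simp add: act_def act_mats_def)

lemma act_mats_eq_tmul_columns:
  "act_mats G H T (i,j,l) = (G *v tmul T (column i H) (column j H)) $ l"
  unfolding act_mats_def tmul_def matrix_vector_mult_def column_def
  by (subst sum_rotate3) (simp add: sum_distrib_left mult_ac)

lemma tmul_add_left: "tmul T (x + x') y = tmul T x y + tmul T x' y"
  by (simp add: tmul_def vec_eq_iff algebra_simps sum.distrib)

lemma tmul_add_right: "tmul T x (y + y') = tmul T x y + tmul T x y'"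
  by (simp add: tmul_def vec_eq_iff algebra_simps sum.distrib)

lemma tmul_scale_left: "tmul T (c *s x) y = c *s tmul T x y"
  by (simp add: tmul_def vec_eq_iff sum_distrib_left mult_ac)

lemma tmul_scale_right: "tmul T x (c *s y) = c *s tmul T x y"
  by (simp add: tmul_def vec_eq_iff sum_distrib_left mult_ac)

lemma tmul_zero_left: "tmul T 0 y = 0"
  and tmul_zero_right: "tmul T x 0 = 0"
  by (simp_all add: tmul_def vec_eq_iff)

lemma tmul_sum_left: "finite A \<Longrightarrow> tmul T (\<Sum>i\<in>A. f i) y = (\<Sum>i\<in>A. tmul T (f i) y)"
  by (induction A rule: finite_induct) (auto simp: tmul_zero_left tmul_add_left)

lemma tmul_sum_right: "finite A \<Longrightarrow> tmul T x (\<Sum>i\<in>A. f i) = (\<Sum>i\<in>A. tmul T x (f i))"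
  by (induction A rule: finite_induct) (auto simp: tmul_zero_right tmul_add_right)

lemma tmul_axis_axis: "tmul T (axis a 1) (axis b 1) = (\<chi> c. T (a,b,c))"
proof -
  have "(\<Sum>b'\<in>UNIV. (if a' = a then 1 else 0) * (if b' = b then 1 else 0) * T (a',b',c))
      = (if a' = a then T (a,b,c) else 0)" for a' c
    by (cases "a' = a") (simp_all add: if_zero_mult)
  then show ?thesis by (simp add: tmul_def axis_def vec_eq_iff)
qed

lemma column_matrix_mult: "column i (A ** B) = A *v column i B"
  by (simp add: column_def matrix_matrix_mult_def matrix_vector_mult_def vec_eq_iff)

lemma column_mat: "column i (mat s :: 'a::comm_ring_1^'n::finite^'n) = s *s axis i 1"
  by (simp add: column_def mat_def axis_def vec_eq_iff)

lemma mat_mult_vec: "mat s *v v = s *s (v :: 'a::comm_ring_1^'n::finite)"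
  by (simp add: vec_eq_iff matrix_vector_mult_def mat_def if_zero_mult)

lemma mat_mult_mat: "mat a ** mat b = (mat (a * b) :: 'a::comm_ring_1^'n::finite^'n)"
  by (simp add: matrix_matrix_mult_def mat_def vec_eq_iff if_zero_mult)

lemma tmul_act_mats:
  fixes T :: "('k::field,'n::finite) tensor"
  shows "tmul (act_mats G H T) x y = G *v tmul T (H *v x) (H *v y)"
proof -
  let ?S = "\<Sum>i\<in>UNIV. \<Sum>j\<in>UNIV. (x$i * y$j) *s (G *v tmul T (column i H) (column j H))"
  have "H *v x = (\<Sum>i\<in>UNIV. x$i *s column i H)" "H *v y = (\<Sum>i\<in>UNIV. y$i *s column i H)"
    by (rule matrix_mult_sum)+
  then have "G *v tmul T (H *v x) (H *v y)
      = (\<Sum>j\<in>UNIV. \<Sum>i\<in>UNIV. (x$i * y$j) *s (G *v tmul T (column i H) (column j H)))"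
    by (simp add: tmul_sum_left tmul_sum_right tmul_scale_left tmul_scale_right vec.sum vec.scale
        vector_smult_assoc mult.commute vec.scale_sum_right del: sum_cmul)
  also have "\<dots> = ?S" by (rule sum.swap)
  also have "?S = tmul (act_mats G H T) x y"
    by (simp add: vec_eq_iff tmul_def act_mats_eq_tmul_columns sum_component mult_ac)
  finally show ?thesis ..
qed

lemma act_mats_act_mats:
  fixes T :: "('k::field,'n::finite) tensor"
  shows "act_mats G1 H1 (act_mats G2 H2 T) = act_mats (G1 ** G2) (H2 ** H1) T"
  by (auto simp: fun_eq_iff act_mats_eq_tmul_columns tmul_act_mats column_matrix_mult
      matrix_vector_mul_assoc)

lemma act_mats_mat: "act_mats (mat s) (mat t) T = (\<lambda>x. s * t * t * T x)"
  by (auto simp: fun_eq_iff act_mats_eq_tmul_columns column_mat mat_mult_vec tmul_scale_left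
      tmul_scale_right tmul_axis_axis mult_ac)

lemma act_mats_id: "act_mats (mat 1) (mat 1) T = T"
  by (simp add: act_mats_mat)

definition inverse_mats :: "'k::comm_ring_1^'n::finite^'n \<Rightarrow> 'k^'n^'n \<Rightarrow> bool" where
  "inverse_mats G H \<longleftrightarrow> G ** H = mat 1 \<and> H ** G = mat 1"

lemma inverse_mats_sym: "inverse_mats G H \<Longrightarrow> inverse_mats H G"
  by (simp add: inverse_mats_def)

lemma inverse_mats_unique: "inverse_mats G H \<Longrightarrow> inverse_mats G H' \<Longrightarrow> H = H'"
  by (metis inverse_mats_def matrix_mul_assoc matrix_mul_lid matrix_mul_rid)

lemma inverse_mats_mult: "inverse_mats G H \<Longrightarrow> inverse_mats G' H' \<Longrightarrow> inverse_mats (G' ** G) (H ** H')"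
  by (simp add: inverse_mats_def matrix_mul_assoc) (metis matrix_mul_assoc matrix_mul_lid)

lemma inverse_mats_mat: "s \<noteq> 0 \<Longrightarrow> inverse_mats (mat s) (mat (inverse s) :: 'k::field^'n::finite^'n)"
  by (simp add: inverse_mats_def mat_mult_mat)

lemma inverse_mats_matrix_inv: "invertible G \<Longrightarrow> inverse_mats G (matrix_inv G)"
  unfolding inverse_mats_def matrix_inv_def invertible_def by (rule someI_ex)

lemma inverse_mats_det_nonzero:
  fixes G :: "'k::field^'n::finite^'n"
  shows "inverse_mats G H \<Longrightarrow> det G \<noteq> 0"
  by (metis inverse_mats_def invertible_def invertible_det_nz)

lemma inverse_mats_act_mats:
  fixes T :: "('k::field,'n::finite) tensor"
  shows "inverse_mats G H \<Longrightarrow> act_mats H G (act_mats G H T) = T"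
  by (simp add: act_mats_act_mats inverse_mats_def act_mats_id)

lemma inverse_mats_mat_inv: "g \<in> GL \<Longrightarrow> inverse_mats (mat_of_fun g) (mat_of_fun (mat_inv g))"
proof -
  assume "g \<in> GL"
  then have "\<exists>h. is_inverse g h" by (simp add: GL_def)
  then have "is_inverse g (mat_inv g)" unfolding mat_inv_def by (rule someI_ex)
  then show ?thesis
    by (simp add: is_inverse_def inverse_mats_def vec_eq_iff matrix_matrix_mult_def mat_def)
qed

lemma fun_of_mat_GL: "inverse_mats G H \<Longrightarrow> fun_of_mat G \<in> GL"
  unfolding GL_def
  by (rule CollectI, rule exI[of _ "fun_of_mat H"])
     (simp add: is_inverse_def inverse_mats_def vec_eq_iff matrix_matrix_mult_def mat_def fun_of_mat_def)

lemma act_mats_fun_of_mat: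
  assumes "inverse_mats G H" shows "act_mats G H T = act (fun_of_mat G) T"
proof -
  have "inverse_mats G (mat_of_fun (mat_inv (fun_of_mat G)))"
    using inverse_mats_mat_inv[OF fun_of_mat_GL[OF assms]] by simp
  then have "mat_of_fun (mat_inv (fun_of_mat G)) = H" using inverse_mats_unique assms by blast
  then show ?thesis by (simp add: act_eq_act_mats)
qed

lemma orbit_eq_act_mats: "orbit T = {act_mats G H T | G H. inverse_mats G H}"
  unfolding orbit_def
proof (intro set_eqI iffI)
  fix x assume "x \<in> {act g T | g. g \<in> GL}"
  then show "x \<in> {act_mats G H T | G H. inverse_mats G H}"
    using inverse_mats_mat_inv act_eq_act_mats by blast
next
  fix x assume "x \<in> {act_mats G H T | G H. inverse_mats G H}"
  then show "x \<in> {act g T | g. g \<in> GL}" using act_mats_fun_of_mat fun_of_mat_GL by blast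
qed

lemma act_mats_in_orbit: "inverse_mats G H \<Longrightarrow> act_mats G H T \<in> orbit T"
  by (auto simp: orbit_eq_act_mats)

lemma orbit_refl: "T \<in> orbit T"
  using act_mats_in_orbit[of "mat 1" "mat 1" T] by (simp add: inverse_mats_def act_mats_id)

lemma orbit_subset:
  fixes a :: "('k::field,'n::finite) tensor"
  assumes "b \<in> orbit a" shows "orbit b \<subseteq> orbit a"
proof
  fix c assume "c \<in> orbit b"
  then obtain G' H' where "inverse_mats G' H'" "c = act_mats G' H' b"
    by (auto simp: orbit_eq_act_mats)
  moreover obtain G H where "inverse_mats G H" "b = act_mats G H a"
    using assms by (auto simp: orbit_eq_act_mats)
  ultimately show "c \<in> orbit a"
    using act_mats_in_orbit[OF inverse_mats_mult] by (simp add: act_mats_act_mats)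
qed

lemma orbit_eq_iff:
  fixes a :: "('k::field,'n::finite) tensor"
  shows "orbit a = orbit b \<longleftrightarrow> b \<in> orbit a"
proof
  assume "b \<in> orbit a"
  then obtain G H where "inverse_mats G H" "b = act_mats G H a" by (auto simp: orbit_eq_act_mats)
  then have "a \<in> orbit b"
    using act_mats_in_orbit[OF inverse_mats_sym, of G H b] by (simp add: inverse_mats_act_mats)
  then show "orbit a = orbit b" using orbit_subset \<open>b \<in> orbit a\<close> by blast
qed (use orbit_refl in auto)

lemma invariant_ratfun_iff_act_mats:
  fixes f :: "(('k::field,'n::finite) tensor \<Rightarrow> 'k) \<times> (('k,'n) tensor \<Rightarrow> 'k)"
  shows "invariant_ratfun f \<longleftrightarrow>
     (\<forall>G H m. inverse_mats G H \<longrightarrow> fst f (act_mats G H m) * snd f m = fst f m * snd f (act_mats G H m))"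
  unfolding invariant_ratfun_def
proof safe
  fix G H :: "'k^'n^'n" and m :: "('k,'n) tensor"
  assume inv: "\<forall>g\<in>GL. \<forall>m. fst f (act g m) * snd f m = fst f m * snd f (act g m)"
    and GH: "inverse_mats G H"
  show "fst f (act_mats G H m) * snd f m = fst f m * snd f (act_mats G H m)"
    unfolding act_mats_fun_of_mat[OF GH] by (rule inv[rule_format, OF fun_of_mat_GL[OF GH]])
next
  fix g :: "'n \<Rightarrow> 'n \<Rightarrow> 'k" and m :: "('k,'n) tensor"
  assume inv: "\<forall>G H m. inverse_mats G H \<longrightarrow>
      fst f (act_mats G H m) * snd f m = fst f m * snd f (act_mats G H m)"
    and g: "g \<in> GL"
  show "fst f (act g m) * snd f m = fst f m * snd f (act g m)"
    unfolding act_eq_act_mats by (rule inv[rule_format, OF inverse_mats_mat_inv[OF g]])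
qed


section \<open>The Krylov normal form\<close>

definition vdot :: "'k::comm_ring_1^'n::finite \<Rightarrow> 'k^'n \<Rightarrow> 'k" where
  "vdot u v = (\<Sum>i\<in>UNIV. u$i * v$i)"

definition trace_vec :: "('k::field,'n::finite) tensor \<Rightarrow> 'k^'n" where
  "trace_vec T = (\<chi> a. \<Sum>b\<in>UNIV. T(a,b,b))"

definition trace_form :: "('k::field,'n::finite) tensor \<Rightarrow> 'k^'n^'n" where
  "trace_form T = (\<chi> a b. \<Sum>c\<in>UNIV. T(a,b,c) * trace_vec T $ c)"

definition trace_disc :: "('k::field,'n::finite) tensor \<Rightarrow> 'k" where
  "trace_disc T = det (trace_form T)"

text \<open>The solution \<open>w\<close> of \<open>B\<^sup>T w = t\<close>, written out by Cramer's rule so that its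
  entries are visibly rational in \<open>T\<close>; it is meaningful only where \<open>trace_disc T \<noteq> 0\<close>.\<close>
definition base_vec :: "('k::field,'n::finite) tensor \<Rightarrow> 'k^'n" where
  "base_vec T = (\<chi> k. det (\<chi> i j. if j = k then trace_vec T $ i else transpose (trace_form T) $ i $ j) / trace_disc T)"

lemma base_vec_unique: "trace_disc T \<noteq> 0 \<Longrightarrow> transpose (trace_form T) *v x = trace_vec T \<longleftrightarrow> x = base_vec T"
  unfolding base_vec_def trace_disc_def using cramer[of "transpose (trace_form T)" x "trace_vec T"]
    by simp

lemma base_vec_solves: "trace_disc T \<noteq> 0 \<Longrightarrow> transpose (trace_form T) *v base_vec T = trace_vec T"
  using base_vec_unique by blast

lemma sum_rotate4: "(\<Sum>j\<in>J. \<Sum>a\<in>A. \<Sum>b\<in>B. \<Sum>c\<in>C. f j a b c) = (\<Sum>a\<in>A. \<Sum>b\<in>B. \<Sum>c\<in>C. \<Sum>j\<in>J. f j a b c)"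
proof -
  have "(\<Sum>j\<in>J. \<Sum>a\<in>A. \<Sum>b\<in>B. \<Sum>c\<in>C. f j a b c) = (\<Sum>a\<in>A. \<Sum>j\<in>J. \<Sum>b\<in>B. \<Sum>c\<in>C. f j a b c)"
    by (rule sum.swap)
  also have "\<dots> = (\<Sum>a\<in>A. \<Sum>b\<in>B. \<Sum>j\<in>J. \<Sum>c\<in>C. f j a b c)"
    by (rule sum.cong[OF refl], rule sum.swap)
  also have "\<dots> = (\<Sum>a\<in>A. \<Sum>b\<in>B. \<Sum>c\<in>C. \<Sum>j\<in>J. f j a b c)"
    by (rule sum.cong[OF refl], rule sum.cong[OF refl], rule sum.swap)
  finally show ?thesis .
qed

lemma trace_vec_act_mats:
  fixes T :: "('k::field,'n::finite) tensor"
  assumes "inverse_mats G H" shows "trace_vec (act_mats G H T) = transpose H *v trace_vec T"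
proof -
  have HG: "H ** G = mat 1" using assms by (simp add: inverse_mats_def)
  have *: "(\<Sum>j\<in>UNIV. G$j$c * T (a,b,c) * H$a$i * H$b$j) = H$a$i * T(a,b,c) * (H ** G)$b$c" for a b c i
    by (simp add: matrix_matrix_mult_def sum_distrib_left mult_ac)
  show ?thesis
    unfolding vec_eq_iff
  proof
    fix i
    have "trace_vec (act_mats G H T) $ i = (\<Sum>j\<in>UNIV. \<Sum>a\<in>UNIV. \<Sum>b\<in>UNIV. \<Sum>c\<in>UNIV. G$j$c * T (a,b,c) * H$a$i * H$b$j)"
      by (simp add: trace_vec_def act_mats_def)
    also have "\<dots> = (\<Sum>a\<in>UNIV. \<Sum>b\<in>UNIV. \<Sum>c\<in>UNIV. H$a$i * T(a,b,c) * (H ** G)$b$c)"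
      by (subst sum_rotate4) (simp add: *)
    also have "\<dots> = (\<Sum>a\<in>UNIV. H$a$i * (\<Sum>b\<in>UNIV. T(a,b,b)))"
      by (simp add: HG mat_def sum_distrib_left if_zero_mult mult_if_zero)
    also have "\<dots> = (transpose H *v trace_vec T) $ i"
      by (simp add: matrix_vector_mult_def transpose_def trace_vec_def)
    finally show "trace_vec (act_mats G H T) $ i = (transpose H *v trace_vec T) $ i" .
  qed
qed

lemma vdot_commute: "vdot u v = vdot v u" by (simp add: vdot_def mult.commute)

lemma vdot_transpose_mult: "vdot (transpose H *v t) u = vdot t (H *v u)"
proof -
  have "vdot (transpose H *v t) u = (\<Sum>i\<in>UNIV. \<Sum>d\<in>UNIV. t$d * (H$d$i * u$i))"
    by (simp add: vdot_def matrix_vector_mult_def transpose_def sum_distrib_right sum_distrib_left mult_ac)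
  also have "\<dots> = (\<Sum>d\<in>UNIV. \<Sum>i\<in>UNIV. t$d * (H$d$i * u$i))" by (rule sum.swap)
  also have "\<dots> = vdot t (H *v u)"
    by (simp add: vdot_def matrix_vector_mult_def sum_distrib_left)
  finally show ?thesis .
qed

lemma trace_form_act_mats:
  fixes T :: "('k::field,'n::finite) tensor"
  assumes "inverse_mats G H" shows "trace_form (act_mats G H T) = transpose H ** trace_form T ** H"
proof -
  have HG: "H ** G = mat 1" using assms by (simp add: inverse_mats_def)
  show ?thesis unfolding vec_eq_iff
  proof (intro allI)
    fix i j
    let ?v = "tmul T (column i H) (column j H)"
    have eq: "\<And>l. act_mats G H T (i,j,l) = (G *v ?v) $ l" by (simp add: act_mats_eq_tmul_columns)
    have "trace_form (act_mats G H T) $ i $ j = vdot (G *v ?v) (transpose H *v trace_vec T)"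
      unfolding trace_form_def vdot_def trace_vec_act_mats[OF assms]
        by (simp only: eq vec_lambda_beta)
    also have "\<dots> = vdot (trace_vec T) ?v"
      by (subst vdot_commute, simp only: vdot_transpose_mult matrix_vector_mul_assoc HG matrix_vector_mul_lid)
    also have "\<dots> = (\<Sum>c\<in>UNIV. \<Sum>a\<in>UNIV. \<Sum>b\<in>UNIV. H$a$i * T(a,b,c) * trace_vec T $ c * H$b$j)"
      by (simp add: vdot_def tmul_def column_def sum_distrib_left mult_ac)
    also have "\<dots> = (\<Sum>a\<in>UNIV. \<Sum>b\<in>UNIV. \<Sum>c\<in>UNIV. H$a$i * T(a,b,c) * trace_vec T $ c * H$b$j)"
      by (rule sum_rotate3[symmetric])
    also have "\<dots> = (\<Sum>b\<in>UNIV. \<Sum>a\<in>UNIV. \<Sum>c\<in>UNIV. H$a$i * T(a,b,c) * trace_vec T $ c * H$b$j)"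
      by (rule sum.swap)
    also have "\<dots> = (transpose H ** trace_form T ** H) $ i $ j"
      by (simp add: matrix_matrix_mult_def transpose_def trace_form_def sum_distrib_left sum_distrib_right mult_ac)
    finally show "trace_form (act_mats G H T) $ i $ j = (transpose H ** trace_form T ** H) $ i $ j" .
  qed
qed

lemma trace_disc_act_mats:
  fixes T :: "('k::field,'n::finite) tensor"
  assumes "inverse_mats G H" shows "trace_disc (act_mats G H T) = det H * det H * trace_disc T"
  by (simp add: trace_disc_def trace_form_act_mats[OF assms] det_mul)

lemma trace_disc_act_mats_nonzero:
  fixes T :: "('k::field,'n::finite) tensor"
  assumes "inverse_mats G H" "trace_disc T \<noteq> 0" shows "trace_disc (act_mats G H T) \<noteq> 0"
  using trace_disc_act_mats[OF assms(1)] inverse_mats_det_nonzero[OF inverse_mats_sym[OF assms(1)]] assms(2)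
    by simp

lemma base_vec_act_mats:
  fixes T :: "('k::field,'n::finite) tensor"
  assumes "inverse_mats G H" "trace_disc T \<noteq> 0" shows "base_vec (act_mats G H T) = G *v base_vec T"
proof -
  have HG: "H ** G = mat 1" using assms by (simp add: inverse_mats_def)
  have "transpose (trace_form (act_mats G H T)) *v (G *v base_vec T) = transpose H *v (transpose (trace_form T) *v ((H ** G) *v base_vec T))"
    by (simp only: trace_form_act_mats[OF assms(1)] matrix_transpose_mul matrix_vector_mul_assoc matrix_mul_assoc transpose_transpose)
  also have "\<dots> = trace_vec (act_mats G H T)"
    by (simp only: HG matrix_vector_mul_lid base_vec_solves[OF assms(2)] trace_vec_act_mats[OF assms(1)])
  finally show ?thesis using base_vec_unique[OF trace_disc_act_mats_nonzero[OF assms]] by metis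
qed

primrec krylov :: "('k::field,'n::finite) tensor \<Rightarrow> nat \<Rightarrow> 'k^'n" where
  "krylov T 0 = base_vec T"
| "krylov T (Suc k) = tmul T (base_vec T) (krylov T k)"

lemma krylov_act_mats:
  fixes T :: "('k::field,'n::finite) tensor"
  assumes "inverse_mats G H" "trace_disc T \<noteq> 0" shows "krylov (act_mats G H T) k = G *v krylov T k"
proof (induction k)
  case 0
  then show ?case by (simp add: base_vec_act_mats[OF assms])
next
  case (Suc k)
  have HG: "H ** G = mat 1" using assms by (simp add: inverse_mats_def)
  show ?case using Suc
    by (simp add: base_vec_act_mats[OF assms] tmul_act_mats matrix_vector_mul_assoc HG)
qed

text \<open>An enumeration \<open>e\<^sub>0, \<dots>, e\<^sub>n\<^sub>-\<^sub>1\<close> of the basis, matching the order of the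
  Krylov vectors.\<close>
definition elem_at :: "nat \<Rightarrow> 'n::finite" where
  "elem_at = (SOME h. bij_betw h {..<CARD('n)} (UNIV::'n set))"

abbreviation first_elem :: "'n::finite" where "first_elem \<equiv> elem_at 0"

abbreviation last_elem :: "'n::finite" where "last_elem \<equiv> elem_at (CARD('n) - 1)"

definition pos_of :: "'n::finite \<Rightarrow> nat" where
  "pos_of = inv_into {..<CARD('n)} elem_at"

lemma elem_at_bij: "bij_betw (elem_at :: nat \<Rightarrow> 'n::finite) {..<CARD('n)} UNIV"
proof -
  obtain h where "bij_betw h {0..<card (UNIV::'n set)} (UNIV::'n set)"
    using ex_bij_betw_nat_finite[of "UNIV::'n set"] by auto
  then have "\<exists>h. bij_betw h {..<CARD('n)} (UNIV::'n set)" by (auto simp: atLeast0LessThan)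
  then show ?thesis unfolding elem_at_def by (rule someI_ex)
qed

lemma pos_of_elem_at: "k < CARD('n::finite) \<Longrightarrow> pos_of (elem_at k :: 'n) = k"
proof -
  assume "k < CARD('n)"
  moreover have "bij_betw (elem_at::nat\<Rightarrow>'n) {..<CARD('n)} UNIV" by (rule elem_at_bij)
  ultimately show ?thesis unfolding pos_of_def by (simp add: bij_betw_def inv_into_f_f)
qed

lemma elem_at_pos_of: "elem_at (pos_of (a::'n::finite)) = a"
  using elem_at_bij unfolding pos_of_def by (metis bij_betw_def f_inv_into_f UNIV_I)

lemma pos_of_less: "pos_of (a::'n::finite) < CARD('n)"
  using elem_at_bij unfolding pos_of_def by (metis bij_betw_def inv_into_into UNIV_I lessThan_iff)

lemma elem_at_eq_iff: "i < CARD('n::finite) \<Longrightarrow> j < CARD('n) \<Longrightarrow> (elem_at i :: 'n) = elem_at j \<longleftrightarrow> i = j"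
  by (metis pos_of_elem_at)

definition krylov_mat :: "('k::field,'n::finite) tensor \<Rightarrow> 'k^'n^'n" where
  "krylov_mat T = (\<chi> i j. krylov T (pos_of j) $ i)"

definition generic :: "('k::field,'n::finite) tensor \<Rightarrow> bool" where
  "generic T \<longleftrightarrow> trace_disc T \<noteq> 0 \<and> det (krylov_mat T) \<noteq> 0"

definition normal_form :: "('k::field,'n::finite) tensor \<Rightarrow> ('k,'n) tensor" where
  "normal_form T = act_mats (matrix_inv (krylov_mat T)) (krylov_mat T) T"

lemma krylov_mat_act_mats:
  fixes T :: "('k::field,'n::finite) tensor"
  assumes "inverse_mats G H" "trace_disc T \<noteq> 0"
  shows "krylov_mat (act_mats G H T) = G ** krylov_mat T"
  by (simp add: krylov_mat_def krylov_act_mats[OF assms] vec_eq_iff matrix_matrix_mult_def matrix_vector_mult_def)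

lemma generic_act_mats:
  fixes T :: "('k::field,'n::finite) tensor"
  assumes "inverse_mats G H" "generic T" shows "generic (act_mats G H T)"
proof -
  have b: "trace_disc T \<noteq> 0" "det (krylov_mat T) \<noteq> 0" using assms by (auto simp: generic_def)
  have "det (krylov_mat (act_mats G H T)) = det G * det (krylov_mat T)"
    by (simp add: krylov_mat_act_mats[OF assms(1) b(1)] det_mul)
  then show ?thesis using b trace_disc_act_mats_nonzero[OF assms(1) b(1)] inverse_mats_det_nonzero[OF assms(1)]
    by (simp add: generic_def)
qed

lemma generic_act_mats_iff:
  fixes T :: "('k::field,'n::finite) tensor"
  assumes "inverse_mats G H" shows "generic (act_mats G H T) \<longleftrightarrow> generic T"
proof
  assume "generic (act_mats G H T)"
  then have "generic (act_mats H G (act_mats G H T))" using generic_act_mats inverse_mats_sym[OF assms]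
    by blast
  then show "generic T" using assms by (simp add: act_mats_act_mats inverse_mats_def act_mats_id)
qed (rule generic_act_mats[OF assms])

lemma generic_inverse_mats:
  fixes T :: "('k::field,'n::finite) tensor"
  assumes "generic T" shows "inverse_mats (krylov_mat T) (matrix_inv (krylov_mat T))"
  using assms inverse_mats_matrix_inv invertible_det_nz unfolding generic_def by blast

lemma normal_form_act_mats:
  fixes T :: "('k::field,'n::finite) tensor"
  assumes "inverse_mats G H" "generic T" shows "normal_form (act_mats G H T) = normal_form T"
proof -
  have b: "trace_disc T \<noteq> 0" using assms by (simp add: generic_def)
  let ?W = "krylov_mat T" and ?Wi = "matrix_inv (krylov_mat T)"
  have W: "inverse_mats ?W ?Wi" by (rule generic_inverse_mats[OF assms(2)])
  have "inverse_mats (G ** ?W) (?Wi ** H)" by (rule inverse_mats_mult[OF W assms(1)])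
  moreover have "inverse_mats (G ** ?W) (matrix_inv (G ** ?W))"
    using generic_inverse_mats[OF generic_act_mats[OF assms]] krylov_mat_act_mats[OF assms(1) b]
      by simp
  ultimately have inv: "matrix_inv (G ** ?W) = ?Wi ** H" using inverse_mats_unique by blast
  have HG: "H ** G = mat 1" using assms by (simp add: inverse_mats_def)
  have "normal_form (act_mats G H T) = act_mats (?Wi ** H ** G) (H ** G ** ?W) T"
    by (simp add: normal_form_def krylov_mat_act_mats[OF assms(1) b] inv act_mats_act_mats matrix_mul_assoc)
  also have "\<dots> = normal_form T" by (simp add: HG matrix_mul_assoc[symmetric] normal_form_def)
  finally show ?thesis .
qed


text \<open>The shape of a tensor whose Krylov basis is the standard one: \<open>T(e\<^sub>0, e\<^sub>k) = e\<^sub>k\<^sub>+\<^sub>1\<close>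
  for \<open>k < n - 1\<close>, and \<open>B(e\<^sub>0, -) = t\<close>, which given the former says that \<open>t\<close> is constant
  and the last column of \<open>T(e\<^sub>0, e\<^sub>n\<^sub>-\<^sub>1)\<close> sums to \<open>1\<close>.\<close>
definition normalized :: "('k::field,'n::finite) tensor \<Rightarrow> bool" where
  "normalized S \<longleftrightarrow>
     (\<forall>k<CARD('n)-1. \<forall>c. S(first_elem, elem_at k, c) = (if c = elem_at (k+1) then 1 else 0)) \<and>
     (\<forall>a. trace_vec S $ a = trace_vec S $ first_elem) \<and>
     (\<Sum>c\<in>UNIV. S(first_elem, last_elem, c)) = 1"

lemma trace_disc_zero:
  fixes T :: "('k::field,'n::finite) tensor"
  shows "trace_vec T = 0 \<Longrightarrow> trace_disc T = 0"
proof -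
  assume "trace_vec T = 0"
  then have "trace_form T = mat 0" by (simp add: trace_form_def mat_def vec_eq_iff)
  then have "trace_disc T = det (mat 0 :: 'k^'n^'n)" by (simp only: trace_disc_def)
  also have "\<dots> = 0" by (rule det_0)
  finally show ?thesis .
qed

lemma elem_at_cases:
  fixes a :: "'n::finite"
  obtains k where "k < CARD('n)" "a = elem_at k"
  using pos_of_less elem_at_pos_of by metis

lemma matrix_vector_mult_axis: "A *v axis k 1 = column k (A :: 'a::comm_ring_1^'n::finite^'m)"
  by (simp add: matrix_vector_mult_def column_def axis_def vec_eq_iff mult_if_zero)

lemma base_vec_eq_axis_iff:
  fixes S :: "('k::field,'n::finite) tensor"
  assumes "trace_disc S \<noteq> 0"
  shows "base_vec S = axis a 1 \<longleftrightarrow> (\<forall>b. (\<Sum>c\<in>UNIV. S (a,b,c) * trace_vec S $ c) = trace_vec S $ b)"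
  using base_vec_unique[OF assms, of "axis a 1"]
  by (auto simp: matrix_vector_mult_axis row_def trace_form_def vec_eq_iff)

lemma krylov_mat_eq_mat_1_iff:
  "krylov_mat S = mat 1 \<longleftrightarrow> (\<forall>k<CARD('n). krylov S k = axis (elem_at k :: 'n::finite) 1)"
proof
  assume W: "krylov_mat S = mat 1"
  have "krylov S k $ i = krylov_mat S $ i $ elem_at k" if "k < CARD('n)" for k i
    using that by (simp add: krylov_mat_def pos_of_elem_at)
  then have "krylov S k $ i = mat 1 $ i $ elem_at k" if "k < CARD('n)" for k i
    using that by (simp add: W)
  then show "\<forall>k<CARD('n). krylov S k = axis (elem_at k) 1"
    by (simp add: vec_eq_iff mat_def axis_def eq_commute)
next
  assume "\<forall>k<CARD('n). krylov S k = axis (elem_at k :: 'n) 1"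
  then have "krylov S (pos_of j) = axis j 1" for j using pos_of_less elem_at_pos_of by metis
  then show "krylov_mat S = mat 1"
    by (simp add: krylov_mat_def vec_eq_iff mat_def axis_def eq_commute)
qed

lemma krylov_eq_axis_iff_shift:
  fixes S :: "('k::field,'n::finite) tensor"
  assumes "base_vec S = axis (first_elem) 1"
  shows "(\<forall>k<CARD('n). krylov S k = axis (elem_at k) 1) \<longleftrightarrow>
    (\<forall>k<CARD('n) - 1. \<forall>c. S (first_elem, elem_at k, c) = (if c = elem_at (k+1) then 1 else 0))"
    (is "?krylov \<longleftrightarrow> ?shift")
proof
  assume K: ?krylov
  show ?shift
  proof (intro allI impI)
    fix k c assume "k < CARD('n) - 1"
    then have "(\<chi> c. S (first_elem, elem_at k, c)) = (axis (elem_at (k+1)) 1 :: 'k^'n)"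
      using K[rule_format, of k] K[rule_format, of "Suc k"] by (simp add: assms tmul_axis_axis)
    then show "S (first_elem, elem_at k, c) = (if c = elem_at (k+1) then 1 else 0)"
      by (simp add: vec_eq_iff axis_def)
  qed
next
  assume shift: ?shift
  have "krylov S k = axis (elem_at k) 1" if "k < CARD('n)" for k
    using that
  proof (induction k)
    case (Suc k)
    then have "(\<chi> c. S (first_elem, elem_at k, c)) = (axis (elem_at (k+1)) 1 :: 'k^'n)"
      using shift by (simp add: vec_eq_iff axis_def)
    then show ?case using Suc by (simp add: assms tmul_axis_axis)
  qed (simp add: assms)
  then show ?krylov by blast
qed

lemma sum_shift:
  fixes S :: "('k::field,'n::finite) tensor"
  assumes "\<forall>k<CARD('n) - 1. \<forall>c. S (first_elem, elem_at k, c) = (if c = elem_at (k+1) then 1 else 0)"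
    and "k < CARD('n) - 1"
  shows "(\<Sum>c\<in>UNIV. S (first_elem, elem_at k, c) * v $ c) = v $ elem_at (k+1)"
proof -
  have "S (first_elem, elem_at k, c) = (if c = elem_at (k+1) then 1 else 0)" for c
    using assms by blast
  then show ?thesis by (simp add: if_zero_mult)
qed

lemma trace_vec_const_of_shift:
  fixes S :: "('k::field,'n::finite) tensor"
  assumes shift: "\<forall>k<CARD('n) - 1. \<forall>c. S (first_elem, elem_at k, c) = (if c = elem_at (k+1) then 1 else 0)"
    and B: "\<forall>b. (\<Sum>c\<in>UNIV. S (first_elem, b, c) * trace_vec S $ c) = trace_vec S $ b"
  shows "trace_vec S $ a = trace_vec S $ first_elem"
proof -
  let ?t = "trace_vec S"
  have tk: "?t $ elem_at k = ?t $ first_elem" if "k < CARD('n)" for k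
    using that
  proof (induction k)
    case (Suc k)
    then have "?t $ elem_at (Suc k) = (\<Sum>c\<in>UNIV. S (first_elem, elem_at k, c) * ?t $ c)"
      using sum_shift[OF shift, of k ?t] by simp
    also have "\<dots> = ?t $ elem_at k" using B by blast
    finally show ?case using Suc by simp
  qed simp
  obtain k where "k < CARD('n)" "a = elem_at k" using elem_at_cases by blast
  then show ?thesis using tk[of k] by simp
qed

text \<open>Given the shift, \<open>B(e\<^sub>0, e\<^sub>k) = t(e\<^sub>k\<^sub>+\<^sub>1)\<close> for \<open>k < n - 1\<close>, so \<open>B(e\<^sub>0, -) = t\<close> makes
  \<open>t\<close> constant, and nonzero as \<open>B\<close> is invertible.\<close>
lemma trace_condition_iff:
  fixes S :: "('k::field,'n::finite) tensor"
  assumes shift: "\<forall>k<CARD('n) - 1. \<forall>c. S (first_elem, elem_at k, c) = (if c = elem_at (k+1) then 1 else 0)"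
    and disc: "trace_disc S \<noteq> 0"
  shows "(\<forall>b. (\<Sum>c\<in>UNIV. S (first_elem, b, c) * trace_vec S $ c) = trace_vec S $ b) \<longleftrightarrow>
    (\<forall>a. trace_vec S $ a = trace_vec S $ first_elem) \<and>
    (\<Sum>c\<in>UNIV. S (first_elem, last_elem, c)) = 1"
    (is "?B \<longleftrightarrow> ?const \<and> ?last")
proof
  let ?t = "trace_vec S" and ?l = "last_elem :: 'n"
  note step = sum_shift[OF shift, of _ ?t]
  have last: "(\<Sum>c\<in>UNIV. S (first_elem, ?l, c) * ?t $ c) = (\<Sum>c\<in>UNIV. S (first_elem, ?l, c)) * \<tau>"
    if "\<forall>a. ?t $ a = \<tau>" for \<tau>
    using that by (simp add: sum_distrib_right)
  {
    assume B: ?B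
    have const: ?const using trace_vec_const_of_shift[OF shift B] by blast
    then obtain \<tau> where \<tau>: "\<forall>a. ?t $ a = \<tau>" by blast
    have "\<tau> \<noteq> 0"
    proof
      assume "\<tau> = 0"
      then have "?t = 0" using \<tau> by (simp add: vec_eq_iff)
      then show False using disc trace_disc_zero by blast
    qed
    moreover from B[rule_format, of ?l] have "(\<Sum>c\<in>UNIV. S (first_elem, ?l, c)) * \<tau> = ?t $ ?l"
      unfolding last[OF \<tau>] .
    ultimately show "?const \<and> ?last" using const \<tau> by simp
  }
  assume "?const \<and> ?last"
  then obtain \<tau> where \<tau>: "\<forall>a. ?t $ a = \<tau>" and sum1: ?last by blast
  show ?B
  proof
    fix b :: 'n
    obtain k where k: "k < CARD('n)" "b = elem_at k" using elem_at_cases by blast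
    show "(\<Sum>c\<in>UNIV. S (first_elem, b, c) * ?t $ c) = ?t $ b"
    proof (cases "k < CARD('n) - 1")
      case True
      have "?t $ elem_at (k+1) = ?t $ elem_at k" using \<tau> by simp
      then show ?thesis unfolding k(2) step[OF True] .
    next
      case False
      then have "k = CARD('n) - 1" using k(1) by linarith
      then have "b = ?l" using k(2) by simp
      have "1 * \<tau> = ?t $ ?l" using \<tau> by simp
      then show ?thesis unfolding \<open>b = ?l\<close> last[OF \<tau>] sum1 .
    qed
  qed
qed

lemma normalized_iff_krylov_mat:
  fixes S :: "('k::field,'n::finite) tensor"
  assumes "CARD('n) \<ge> 2" "trace_disc S \<noteq> 0"
  shows "normalized S \<longleftrightarrow> krylov_mat S = mat 1"
proof
  assume "normalized S"
  then have "base_vec S = axis (first_elem) 1"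
    using trace_condition_iff[OF _ assms(2)] base_vec_eq_axis_iff[OF assms(2)]
    by (auto simp: normalized_def)
  with \<open>normalized S\<close> show "krylov_mat S = mat 1"
    by (simp add: krylov_mat_eq_mat_1_iff krylov_eq_axis_iff_shift normalized_def)
next
  assume "krylov_mat S = mat 1"
  then have K: "\<forall>k<CARD('n). krylov S k = axis (elem_at k) 1" by (simp add: krylov_mat_eq_mat_1_iff)
  then have w: "base_vec S = axis (first_elem) 1" using assms(1)
    by (metis krylov.simps(1) not_numeral_le_zero neq0_conv)
  have shift: "\<forall>k<CARD('n) - 1. \<forall>c. S (first_elem, elem_at k, c) = (if c = elem_at (k+1) then 1 else 0)"
    using K krylov_eq_axis_iff_shift[OF w] by blast
  moreover have "\<forall>b. (\<Sum>c\<in>UNIV. S (first_elem, b, c) * trace_vec S $ c) = trace_vec S $ b"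
    using w base_vec_eq_axis_iff[OF assms(2)] by blast
  ultimately show "normalized S"
    using trace_condition_iff[OF shift assms(2)] by (simp add: normalized_def)
qed

lemma matrix_inv_mat_1: "matrix_inv (mat 1 :: 'k::field^'n::finite^'n) = mat 1"
proof -
  have "inverse_mats (mat 1) (mat 1 :: 'k^'n^'n)" by (simp add: inverse_mats_def)
  moreover from this have "invertible (mat 1 :: 'k^'n^'n)" unfolding invertible_def inverse_mats_def
    by blast
  ultimately show ?thesis using inverse_mats_matrix_inv inverse_mats_unique by blast
qed

lemma generic_of_normalized:
  fixes S :: "('k::field,'n::finite) tensor"
  assumes "CARD('n) \<ge> 2" "normalized S" "trace_disc S \<noteq> 0"
  shows "generic S"
  using assms normalized_iff_krylov_mat[OF assms(1,3)] by (simp add: generic_def)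

lemma normal_form_of_normalized:
  fixes S :: "('k::field,'n::finite) tensor"
  assumes "CARD('n) \<ge> 2" "normalized S" "trace_disc S \<noteq> 0"
  shows "normal_form S = S"
  using assms normalized_iff_krylov_mat[OF assms(1,3)]
  by (simp add: normal_form_def matrix_inv_mat_1 act_mats_id)

lemma generic_normal_form:
  fixes T :: "('k::field,'n::finite) tensor"
  assumes "generic T" shows "generic (normal_form T)"
  unfolding normal_form_def
    using generic_act_mats[OF inverse_mats_sym[OF generic_inverse_mats] assms] assms .

lemma normalized_normal_form:
  fixes T :: "('k::field,'n::finite) tensor"
  assumes n2: "CARD('n) \<ge> 2" and g: "generic T"
  shows "normalized (normal_form T)"
proof -
  have W: "inverse_mats (matrix_inv (krylov_mat T)) (krylov_mat T)"
    using inverse_mats_sym[OF generic_inverse_mats[OF g]] .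
  have "krylov_mat (normal_form T) = matrix_inv (krylov_mat T) ** krylov_mat T"
    unfolding normal_form_def using krylov_mat_act_mats[OF W] g by (simp add: generic_def)
  then have "krylov_mat (normal_form T) = mat 1" using W by (simp add: inverse_mats_def)
  moreover have "trace_disc (normal_form T) \<noteq> 0" using generic_normal_form[OF g]
    by (simp add: generic_def)
  ultimately show ?thesis using normalized_iff_krylov_mat[OF n2] by blast
qed

lemma normal_form_in_orbit:
  fixes T :: "('k::field,'n::finite) tensor"
  shows "generic T \<Longrightarrow> normal_form T \<in> orbit T"
  unfolding normal_form_def
    by (rule act_mats_in_orbit[OF inverse_mats_sym[OF generic_inverse_mats]])

lemma orbit_eq_iff_normal_form:
  fixes a b :: "('k::field,'n::finite) tensor"
  assumes "generic a" "generic b"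
  shows "orbit a = orbit b \<longleftrightarrow> normal_form a = normal_form b"
proof
  assume "orbit a = orbit b"
  then have "b \<in> orbit a" using orbit_eq_iff by blast
  then obtain G H where "inverse_mats G H" "b = act_mats G H a" by (auto simp: orbit_eq_act_mats)
  then show "normal_form a = normal_form b" using normal_form_act_mats assms(1) by metis
next
  assume "normal_form a = normal_form b"
  then show "orbit a = orbit b"
    using normal_form_in_orbit[OF assms(1)] normal_form_in_orbit[OF assms(2)]
    by (metis orbit_eq_iff)
qed

section \<open>Rational functions with a fixed denominator\<close>

definition rat_over :: "(('x \<Rightarrow> 'k) \<Rightarrow> 'k) \<Rightarrow> (('x \<Rightarrow> 'k) \<Rightarrow> 'k::field) \<Rightarrow> bool" where
  "rat_over D F \<longleftrightarrow> (\<exists>p k. poly_fun UNIV p \<and> (\<forall>T. D T \<noteq> 0 \<longrightarrow> F T = p T / D T ^ k))"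

lemma rat_over_poly: "poly_fun UNIV p \<Longrightarrow> rat_over D p"
  unfolding rat_over_def by (rule exI[of _ p], rule exI[of _ 0]) simp

lemma rat_over_const: "rat_over D (\<lambda>T. c)" by (rule rat_over_poly, rule pf_const)

lemma rat_over_cong: "rat_over D F \<Longrightarrow> (\<And>T. D T \<noteq> 0 \<Longrightarrow> F T = G T) \<Longrightarrow> rat_over D G"
  unfolding rat_over_def by metis

lemma rat_over_add:
  assumes D: "poly_fun UNIV D" and "rat_over D F" "rat_over D G"
  shows "rat_over D (\<lambda>T. F T + G T)"
proof -
  obtain p k q l where pk: "poly_fun UNIV p" "\<forall>T. D T \<noteq> 0 \<longrightarrow> F T = p T / D T ^ k"
     and ql: "poly_fun UNIV q" "\<forall>T. D T \<noteq> 0 \<longrightarrow> G T = q T / D T ^ l"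
    using assms unfolding rat_over_def by blast
  show ?thesis unfolding rat_over_def
  proof (intro exI conjI allI impI)
    show "poly_fun UNIV (\<lambda>T. p T * D T ^ l + q T * D T ^ k)"
      by (intro pf_add pf_mult poly_fun_power pk ql D)
    fix T assume "D T \<noteq> 0"
    then show "F T + G T = (p T * D T ^ l + q T * D T ^ k) / D T ^ (k + l)"
      using pk ql by (simp add: field_simps power_add)
  qed
qed

lemma rat_over_mult:
  assumes D: "poly_fun UNIV D" and "rat_over D F" "rat_over D G"
  shows "rat_over D (\<lambda>T. F T * G T)"
proof -
  obtain p k q l where pk: "poly_fun UNIV p" "\<forall>T. D T \<noteq> 0 \<longrightarrow> F T = p T / D T ^ k"
     and ql: "poly_fun UNIV q" "\<forall>T. D T \<noteq> 0 \<longrightarrow> G T = q T / D T ^ l"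
    using assms unfolding rat_over_def by blast
  show ?thesis unfolding rat_over_def
  proof (intro exI conjI allI impI)
    show "poly_fun UNIV (\<lambda>T. p T * q T)" by (intro pf_mult pk ql)
    fix T assume "D T \<noteq> 0"
    then show "F T * G T = (p T * q T) / D T ^ (k + l)"
      using pk ql by (simp add: field_simps power_add)
  qed
qed

lemma rat_over_sum:
  assumes D: "poly_fun UNIV D"
  shows "finite A \<Longrightarrow> (\<And>a. a \<in> A \<Longrightarrow> rat_over D (F a)) \<Longrightarrow> rat_over D (\<lambda>T. \<Sum>a\<in>A. F a T)"
proof (induction A rule: finite_induct)
  case empty then show ?case using rat_over_const[of D 0] by simp
next
  case (insert a A) then show ?case by (simp add: rat_over_add[OF D])
qed

lemma rat_over_prod:
  assumes D: "poly_fun UNIV D"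
  shows "finite A \<Longrightarrow> (\<And>a. a \<in> A \<Longrightarrow> rat_over D (F a)) \<Longrightarrow> rat_over D (\<lambda>T. \<Prod>a\<in>A. F a T)"
proof (induction A rule: finite_induct)
  case empty then show ?case using rat_over_const[of D 1] by simp
next
  case (insert a A) then show ?case by (simp add: rat_over_mult[OF D])
qed

lemma rat_over_det:
  fixes M :: "('x \<Rightarrow> 'k::field) \<Rightarrow> 'k^'n::finite^'n"
  assumes D: "poly_fun UNIV D" and M: "\<And>i j. rat_over D (\<lambda>T. M T $ i $ j)"
  shows "rat_over D (\<lambda>T. det (M T))"
  unfolding det_def
  by (intro rat_over_sum[OF D] rat_over_mult[OF D] rat_over_prod[OF D] rat_over_const M) (simp_all add: finite_permutations)

lemma rat_over_divide_denom:
  assumes "rat_over D F" shows "rat_over D (\<lambda>T. F T / D T)"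
proof -
  obtain p k where pk: "poly_fun UNIV p" "\<forall>T. D T \<noteq> 0 \<longrightarrow> F T = p T / D T ^ k"
    using assms unfolding rat_over_def by blast
  show ?thesis unfolding rat_over_def
    by (rule exI[of _ p], rule exI[of _ "Suc k"]) (simp add: pk)
qed

lemma rat_over_divide_power:
  assumes "poly_fun UNIV q" shows "rat_over D (\<lambda>T. q T / D T ^ j)"
  unfolding rat_over_def using assms by blast

lemma rat_over_mult_denom:
  assumes "rat_over D F" "poly_fun UNIV E"
  shows "rat_over (\<lambda>T. D T * E T) F"
proof -
  obtain p k where pk: "poly_fun UNIV p" "\<forall>T. D T \<noteq> 0 \<longrightarrow> F T = p T / D T ^ k"
    using assms unfolding rat_over_def by blast
  show ?thesis unfolding rat_over_def
  proof (intro exI conjI allI impI)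
    show "poly_fun UNIV (\<lambda>T. p T * E T ^ k)" by (intro pf_mult poly_fun_power pk assms)
    fix T assume "D T * E T \<noteq> 0"
    then show "F T = p T * E T ^ k / (D T * E T) ^ k" using pk by (simp add: power_mult_distrib)
  qed
qed

lemma rat_over_if: "rat_over D F \<Longrightarrow> rat_over D G \<Longrightarrow> rat_over D (\<lambda>T. if P then F T else G T)"
  by (cases P) simp_all

lemma rat_over_var: "rat_over D (\<lambda>T. T x)" by (rule rat_over_poly, rule pf_var) simp

lemma poly_fun_trace_vec: "poly_fun UNIV (\<lambda>T. trace_vec T $ a)"
  unfolding trace_vec_def by (simp, intro poly_fun_sum pf_var) simp_all

lemma poly_fun_trace_form: "poly_fun UNIV (\<lambda>T. trace_form T $ a $ b)"
  unfolding trace_form_def by (simp, intro poly_fun_sum pf_mult pf_var poly_fun_trace_vec) simp_all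

lemma poly_fun_trace_disc: "poly_fun UNIV (trace_disc :: ('k::field,'n::finite) tensor \<Rightarrow> 'k)"
proof -
  have "poly_fun UNIV (\<lambda>T::('k,'n) tensor. det (trace_form T))"
    by (rule poly_fun_det, rule poly_fun_trace_form)
  then show ?thesis by (simp add: trace_disc_def[abs_def])
qed

lemma rat_over_tmul:
  fixes x y :: "('k::field,'n::finite) tensor \<Rightarrow> 'k^'n"
  assumes D: "poly_fun UNIV D" and "\<And>a. rat_over D (\<lambda>T. x T $ a)" "\<And>a. rat_over D (\<lambda>T. y T $ a)"
  shows "rat_over D (\<lambda>T. tmul T (x T) (y T) $ c)"
  unfolding tmul_def
    by (simp, intro rat_over_sum[OF D] rat_over_mult[OF D] rat_over_var assms) simp_all

lemma rat_over_base_vec: "rat_over trace_disc (\<lambda>T::('k::field,'n::finite) tensor. base_vec T $ a)"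
proof -
  have h: "\<And>i j. rat_over trace_disc (\<lambda>T::('k,'n) tensor. if j = a then trace_vec T $ i else transpose (trace_form T) $ i $ j)"
    by (intro rat_over_if) (simp_all add: transpose_def rat_over_poly poly_fun_trace_vec poly_fun_trace_form)
  have "rat_over trace_disc (\<lambda>T::('k,'n) tensor. det (\<chi> i j. if j = a then trace_vec T $ i else transpose (trace_form T) $ i $ j))"
    by (rule rat_over_det[OF poly_fun_trace_disc]) (simp add: h)
  then show ?thesis using rat_over_divide_denom by (fastforce simp: base_vec_def)
qed

lemma rat_over_krylov: "rat_over trace_disc (\<lambda>T. krylov T k $ a)"
proof (induction k arbitrary: a)
  case 0 then show ?case by (simp add: rat_over_base_vec)
next
  case (Suc k) then show ?case
    by (simp, intro rat_over_tmul[OF poly_fun_trace_disc] rat_over_base_vec)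
qed

lemma rat_over_krylov_mat: "rat_over trace_disc (\<lambda>T. krylov_mat T $ i $ j)"
  unfolding krylov_mat_def by (simp add: rat_over_krylov)

lemma rat_over_det_krylov_mat: "rat_over trace_disc (\<lambda>T. det (krylov_mat T))"
  by (rule rat_over_det[OF poly_fun_trace_disc rat_over_krylov_mat])

lemma matrix_inv_mult_cramer:
  fixes W :: "'k::field^'n::finite^'n"
  assumes "det W \<noteq> 0"
  shows "(matrix_inv W *v v) $ c = det (\<chi> i j. if j = c then v $ i else W $ i $ j) / det W"
proof -
  have "inverse_mats W (matrix_inv W)" using assms inverse_mats_matrix_inv invertible_det_nz
    by blast
  then have "W *v (matrix_inv W *v v) = v" by (simp add: matrix_vector_mul_assoc inverse_mats_def)
  then have "matrix_inv W *v v = (\<chi> k. det (\<chi> i j. if j = k then v $ i else W $ i $ j) / det W)"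
    using cramer[OF assms] by blast
  then show ?thesis by simp
qed

text \<open>The numerator of Cramer's rule for the entries of \<open>normal_form T\<close>.\<close>
definition normal_form_numer :: "('k::field,'n::finite) tensor \<Rightarrow> 'n \<times> 'n \<times> 'n \<Rightarrow> 'k" where
  "normal_form_numer T = (\<lambda>(a,b,c). det (\<chi> i j. if j = c
     then tmul T (column a (krylov_mat T)) (column b (krylov_mat T)) $ i else krylov_mat T $ i $ j))"

lemma normal_form_cramer:
  fixes T :: "('k::field,'n::finite) tensor"
  assumes "det (krylov_mat T) \<noteq> 0"
  shows "normal_form T x = normal_form_numer T x / det (krylov_mat T)"
  using matrix_inv_mult_cramer[OF assms]
  by (cases x) (simp add: normal_form_def act_mats_eq_tmul_columns normal_form_numer_def)

lemma rat_over_normal_form_numer: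
  assumes D: "poly_fun UNIV D" and W: "\<And>i j. rat_over D (\<lambda>T. krylov_mat T $ i $ j)"
  shows "rat_over D (\<lambda>T::('k::field,'n::finite) tensor. normal_form_numer T x)"
proof -
  have col: "rat_over D (\<lambda>T. column a (krylov_mat T) $ i)" for a i by (simp add: column_def W)
  show ?thesis
    unfolding normal_form_numer_def
    by (cases x, simp, rule rat_over_det[OF D], simp, intro rat_over_if)
       (simp_all add: W rat_over_tmul[OF D col col])
qed

text \<open>With \<open>det W = p / trace_disc\<^sup>k\<close> the entries of the normal form have a power of
  \<open>trace_disc \<cdot> p\<close> as denominator, since \<open>1 / det W = trace_disc\<^sup>k\<^sup>+\<^sup>1 / (trace_disc \<cdot> p)\<close>.\<close>
lemma rat_over_normal_form:
  fixes pd :: "('k::field,'n::finite) tensor \<Rightarrow> 'k"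
  assumes pd: "poly_fun UNIV pd"
    and dW: "\<And>T. trace_disc T \<noteq> 0 \<Longrightarrow> det (krylov_mat T) = pd T / trace_disc T ^ kd"
  shows "rat_over (\<lambda>T. trace_disc T * pd T) (\<lambda>T. normal_form T x)"
proof -
  let ?D = "\<lambda>T. trace_disc T * pd T"
  have D: "poly_fun UNIV ?D" by (intro pf_mult poly_fun_trace_disc pd)
  have num: "rat_over ?D (\<lambda>T. normal_form_numer T x)"
    by (intro rat_over_normal_form_numer D rat_over_mult_denom[OF rat_over_krylov_mat pd])
  have inv: "rat_over ?D (\<lambda>T. trace_disc T ^ Suc kd / ?D T ^ 1)"
    by (rule rat_over_divide_power, intro poly_fun_power poly_fun_trace_disc)
  from rat_over_mult[OF D num inv] show ?thesis
  proof (rule rat_over_cong)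
    fix T assume "?D T \<noteq> 0"
    then have "trace_disc T \<noteq> 0" "pd T \<noteq> 0" by auto
    moreover from this have "det (krylov_mat T) \<noteq> 0" using dW by simp
    then have "normal_form T x = normal_form_numer T x / det (krylov_mat T)"
      by (rule normal_form_cramer)
    ultimately show "normal_form_numer T x * (trace_disc T ^ Suc kd / ?D T ^ 1) = normal_form T x"
      using dW by (simp add: field_simps)
  qed
qed


section \<open>Free coordinates of normalized tensors\<close>

text \<open>The \<open>n\<^sup>2\<close> entries of a normalized tensor that are determined by the others:
  \<open>T(e\<^sub>0, b, -)\<close> for \<open>b \<noteq> e\<^sub>n\<^sub>-\<^sub>1\<close> (the shift), \<open>T(e\<^sub>0, e\<^sub>n\<^sub>-\<^sub>1, e\<^sub>0)\<close> (from the
  unit sum) and \<open>T(a, e\<^sub>n\<^sub>-\<^sub>1, e\<^sub>n\<^sub>-\<^sub>1)\<close> for \<open>a \<noteq> e\<^sub>0\<close> (from the constancy of \<open>t\<close>).\<close>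
definition fixed_coords :: "('n::finite \<times> 'n \<times> 'n) set" where
  "fixed_coords = {(first_elem, b, c) | b c. b \<noteq> last_elem} \<union> {(first_elem, last_elem, first_elem)}
        \<union> {(a, last_elem, last_elem) | a. a \<noteq> first_elem}"

definition free_coords :: "('n::finite \<times> 'n \<times> 'n) set" where
  "free_coords = UNIV - fixed_coords"

lemma elem_at_first_ne_last: "CARD('n::finite) \<ge> 2 \<Longrightarrow> (first_elem :: 'n) \<noteq> last_elem"
  using elem_at_eq_iff[where 'n='n, of 0 "CARD('n) - 1"] by auto

lemma card_fixed_coords:
  assumes n2: "CARD('n::finite) \<ge> 2"
  shows "card (fixed_coords :: ('n \<times> 'n \<times> 'n) set) = CARD('n) ^ 2"
proof -
  let ?l = "last_elem :: 'n" and ?e = "first_elem :: 'n"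
  define \<phi> where "\<phi> = (\<lambda>(b,c). if b \<noteq> ?l then (?e, b, c) else if c = ?e then (?e, ?l, ?e) else (c, ?l, ?l))"
  have ne: "?e \<noteq> ?l" by (rule elem_at_first_ne_last[OF n2])
  have inj: "inj \<phi>" unfolding inj_def \<phi>_def using ne by (auto split: if_splits)
  have img: "\<phi> ` UNIV = fixed_coords"
  proof
    show "\<phi> ` UNIV \<subseteq> fixed_coords"
    proof (rule image_subsetI)
      fix x :: "'n \<times> 'n" assume "x \<in> UNIV"
      obtain b c where x: "x = (b, c)" by (cases x) auto
      have "\<phi> (b, c) \<in> fixed_coords"
      proof (cases "b \<noteq> ?l")
        case True
        then have "\<phi> (b, c) = (?e, b, c)" by (simp add: \<phi>_def)
        then show ?thesis using True unfolding fixed_coords_def by blast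
      next
        case F: False
        show ?thesis
        proof (cases "c = ?e")
          case True
          then have "\<phi> (b, c) = (?e, ?l, ?e)" using F by (simp add: \<phi>_def)
          then show ?thesis unfolding fixed_coords_def by blast
        next
          case False
          then have "\<phi> (b, c) = (c, ?l, ?l)" using F by (simp add: \<phi>_def)
          then show ?thesis using False unfolding fixed_coords_def by blast
        qed
      qed
      then show "\<phi> x \<in> fixed_coords" using x by simp
    qed
    show "fixed_coords \<subseteq> \<phi> ` UNIV"
    proof
      fix x assume "x \<in> (fixed_coords :: ('n \<times> 'n \<times> 'n) set)"
      then consider b c where "x = (?e, b, c)" "b \<noteq> ?l" | "x = (?e, ?l, ?e)" | a where "x = (a, ?l, ?l)" "a \<noteq> ?e"
        unfolding fixed_coords_def by blast
      then show "x \<in> \<phi> ` UNIV"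
      proof cases
        case (1 b c) then show ?thesis unfolding \<phi>_def by (intro image_eqI[of _ _ "(b,c)"]) auto
      next
        case 2 then show ?thesis unfolding \<phi>_def by (intro image_eqI[of _ _ "(?l,?e)"]) auto
      next
        case (3 a) then show ?thesis unfolding \<phi>_def using ne
          by (intro image_eqI[of _ _ "(?l,a)"]) auto
      qed
    qed
  qed
  have "card (fixed_coords :: ('n \<times> 'n \<times> 'n) set) = card (UNIV :: ('n \<times> 'n) set)"
    using card_image[OF inj_on_subset[OF inj subset_UNIV]] img by metis
  then show ?thesis by (simp add: card_cartesian_product power2_eq_square)
qed

lemma card_free_coords:
  assumes n2: "CARD('n::finite) \<ge> 2"
  shows "card (free_coords :: ('n \<times> 'n \<times> 'n) set) = CARD('n) ^ 3 - CARD('n) ^ 2"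
proof -
  have "card (free_coords :: ('n \<times> 'n \<times> 'n) set) = card (UNIV :: ('n \<times> 'n \<times> 'n) set) - card (fixed_coords :: ('n \<times> 'n \<times> 'n) set)"
    unfolding free_coords_def by (rule card_Diff_subset) auto
  then show ?thesis using card_fixed_coords[OF n2]
    by (simp add: card_cartesian_product power3_eq_cube)
qed

text \<open>The normalized tensor whose free entries \<open>t\<close> are \<open>y (xi t)\<close>; the fixed entries are
  solved from the normalization equations.\<close>
definition from_coords :: "('n::finite \<times> 'n \<times> 'n \<Rightarrow> nat) \<Rightarrow> (nat \<Rightarrow> 'k::field) \<Rightarrow> ('k,'n) tensor" where
  "from_coords xi y = (\<lambda>(a,b,c).
     if a = first_elem \<and> b \<noteq> last_elem then (if c = elem_at (pos_of b + 1) then 1 else 0)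
     else if a = first_elem \<and> b = last_elem \<and> c = first_elem then 1 - (\<Sum>c'\<in>UNIV - {first_elem}. y (xi (first_elem, last_elem, c')))
     else if a \<noteq> first_elem \<and> b = last_elem \<and> c = last_elem
       then y (xi (first_elem, last_elem, last_elem)) - (\<Sum>b'\<in>UNIV - {last_elem}. y (xi (a, b', b')))
     else y (xi (a,b,c)))"

lemma from_coords_shift: "a = first_elem \<Longrightarrow> b \<noteq> last_elem \<Longrightarrow>
  from_coords xi y (a,b,c) = (if c = elem_at (pos_of b + 1) then 1 else (0::'k::field))" for a b c :: "'n::finite"
  by (simp add: from_coords_def)
lemma from_coords_first: "a = first_elem \<Longrightarrow> b = last_elem \<Longrightarrow> c = first_elem \<Longrightarrow>
  from_coords xi y (a,b,c) = 1 - (\<Sum>c'\<in>UNIV - {first_elem}. (y (xi (first_elem, last_elem, c')) :: 'k::field))" for a b c :: "'n::finite"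
  by (simp add: from_coords_def)
lemma from_coords_last: "a \<noteq> first_elem \<Longrightarrow> b = last_elem \<Longrightarrow> c = last_elem \<Longrightarrow>
  from_coords xi y (a,b,c) = (y (xi (first_elem, last_elem, last_elem)) :: 'k::field) - (\<Sum>b'\<in>UNIV - {last_elem}. y (xi (a, b', b')))" for a b c :: "'n::finite"
  by (simp add: from_coords_def)
lemma pos_of_less_last:
  assumes "(b::'n::finite) \<noteq> last_elem" shows "pos_of b < CARD('n) - 1"
proof -
  have "pos_of b \<noteq> CARD('n) - 1" using assms elem_at_pos_of by metis
  then show ?thesis using pos_of_less[of b] by simp
qed

lemma elem_at_succ_ne:
  assumes "(b::'n::finite) \<noteq> last_elem" shows "b \<noteq> elem_at (Suc (pos_of b))"
proof -
  have "Suc (pos_of b) < CARD('n)" using pos_of_less_last[OF assms] by simp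
  then have "pos_of (elem_at (Suc (pos_of b)) :: 'n) = Suc (pos_of b)" by (rule pos_of_elem_at)
  then show ?thesis by auto
qed

lemma sum_UNIV_remove: "(\<Sum>x\<in>UNIV. f x) = f a + (\<Sum>x\<in>UNIV - {a}. f (x::'a::finite))"
  by (simp add: sum.remove)

lemma trace_vec_remove_last:
  "trace_vec S $ a = S (a, last_elem, last_elem) + (\<Sum>b\<in>UNIV - {last_elem}. S (a, b, b))"
  unfolding trace_vec_def by (simp add: sum_UNIV_remove[of _ last_elem])

lemma trace_vec_first_of_shift:
  fixes S :: "('k::field,'n::finite) tensor"
  assumes "\<forall>k<CARD('n) - 1. \<forall>c. S (first_elem, elem_at k, c) = (if c = elem_at (k+1) then 1 else 0)"
  shows "trace_vec S $ first_elem = S (first_elem, last_elem, last_elem)"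
proof -
  have "S (first_elem, b, b) = 0" if "b \<noteq> last_elem" for b :: 'n
    using assms pos_of_less_last[OF that] elem_at_succ_ne[OF that] by (metis Suc_eq_plus1 elem_at_pos_of)
  then show ?thesis by (simp add: trace_vec_remove_last)
qed

lemma normalized_from_coords:
  fixes y :: "nat \<Rightarrow> 'k::field" and xi :: "'n::finite \<times> 'n \<times> 'n \<Rightarrow> nat"
  assumes n2: "CARD('n::finite) \<ge> 2"
  shows "normalized (from_coords xi y :: ('k,'n) tensor)"
proof -
  let ?l = "last_elem :: 'n" and ?e = "first_elem :: 'n" and ?S = "from_coords xi y :: ('k,'n) tensor"
  have ne: "?e \<noteq> ?l" by (rule elem_at_first_ne_last[OF n2])
  have shift: "\<forall>k<CARD('n)-1. \<forall>c. ?S(?e, elem_at k, c) = (if c = elem_at (k+1) then 1 else 0)"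
  proof (intro allI impI)
    fix k c assume k: "k < CARD('n) - 1"
    then have "elem_at k \<noteq> ?l" using elem_at_eq_iff[where 'n='n, of k "CARD('n) - 1"] by auto
    moreover have "pos_of (elem_at k :: 'n) = k" using k by (intro pos_of_elem_at) simp
    ultimately show "?S(?e, elem_at k, c) = (if c = elem_at (k+1) then 1 else 0)"
      by (simp add: from_coords_def)
  qed
  have "trace_vec ?S $ ?e = ?S (?e, ?l, ?l)" by (rule trace_vec_first_of_shift[OF shift])
  also have "\<dots> = y (xi (?e, ?l, ?l))" using ne by (simp add: from_coords_def)
  finally have te: "trace_vec ?S $ ?e = y (xi (?e, ?l, ?l))" .
  have "trace_vec ?S $ a = trace_vec ?S $ ?e" for a
  proof (cases "a = ?e")
    case False
    have "trace_vec ?S $ a = ?S (a, ?l, ?l) + (\<Sum>b\<in>UNIV - {?l}. ?S (a, b, b))"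
      by (rule trace_vec_remove_last)
    also have "(\<Sum>b\<in>UNIV - {?l}. ?S (a, b, b)) = (\<Sum>b\<in>UNIV - {?l}. y (xi (a, b, b)))"
      using False by (intro sum.cong refl) (auto simp: from_coords_def)
    finally show ?thesis using False te by (simp add: from_coords_def)
  qed simp
  moreover have "(\<Sum>c\<in>UNIV - {?e}. ?S(?e, ?l, c)) = (\<Sum>c\<in>UNIV - {?e}. y (xi (?e, ?l, c)))"
    by (intro sum.cong refl) (auto simp: from_coords_def)
  then have "(\<Sum>c\<in>UNIV. ?S(?e, ?l, c)) = 1" by (simp add: sum_UNIV_remove[of _ ?e] from_coords_def)
  ultimately show ?thesis unfolding normalized_def using shift by blast
qed

lemma free_coords_iff:
  "(a,b,c) \<in> free_coords \<longleftrightarrow> \<not> (a = first_elem \<and> b \<noteq> last_elem) \<and>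
     \<not> (a = first_elem \<and> b = last_elem \<and> c = first_elem) \<and> \<not> (a \<noteq> first_elem \<and> b = last_elem \<and> c = last_elem)"
  unfolding free_coords_def fixed_coords_def by auto

lemma from_coords_free:
  fixes t :: "'n::finite \<times> 'n \<times> 'n" and y :: "nat \<Rightarrow> 'k::field"
  assumes "t \<in> free_coords" shows "from_coords xi y t = y (xi t)"
proof -
  obtain a b c where t: "t = (a, b, c)" by (cases t)
  then have "\<not> (a = first_elem \<and> b \<noteq> last_elem)" "\<not> (a = first_elem \<and> b = last_elem \<and> c = first_elem)"
    "\<not> (a \<noteq> first_elem \<and> b = last_elem \<and> c = last_elem)"
    using assms free_coords_iff by blast+
  then show ?thesis unfolding t from_coords_def by (simp only: prod.case if_False)
qed

lemma from_coords_coords: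
  fixes S :: "('k::field,'n::finite) tensor"
  assumes n2: "CARD('n) \<ge> 2" and normalized: "normalized S"
    and en: "\<And>t. t \<in> free_coords \<Longrightarrow> en (xi t) = t"
  shows "from_coords xi (\<lambda>i. S (en i)) = S"
proof (rule ext, clarify)
  let ?l = "last_elem :: 'n" and ?e = "first_elem :: 'n"
  have ne: "?e \<noteq> ?l" by (rule elem_at_first_ne_last[OF n2])
  have shift: "\<forall>k<CARD('n)-1. \<forall>c. S(?e, elem_at k, c) = (if c = elem_at (k+1) then 1 else 0)"
   and ta: "\<And>a. trace_vec S $ a = trace_vec S $ ?e"
   and s3: "(\<Sum>c\<in>UNIV. S(?e, ?l, c)) = 1" using normalized unfolding normalized_def by blast+
  fix a b c :: 'n
  consider (shifted) "a = ?e" "b \<noteq> ?l" | (first) "a = ?e" "b = ?l" "c = ?e"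
    | (last) "a \<noteq> ?e" "b = ?l" "c = ?l" | (free) "(a,b,c) \<in> free_coords"
    using free_coords_iff by blast
  then show "from_coords xi (\<lambda>i. S (en i)) (a, b, c) = S (a, b, c)"
  proof cases
    case shifted
    then show ?thesis
      using shift[rule_format, OF pos_of_less_last[OF shifted(2)], of c]
      by (simp add: from_coords_def elem_at_pos_of)
  next
    case first
    have "(\<Sum>c'\<in>UNIV - {?e}. S (en (xi (?e, ?l, c')))) = (\<Sum>c'\<in>UNIV - {?e}. S (?e, ?l, c'))"
      using ne by (intro sum.cong refl) (simp add: en free_coords_iff)
    then show ?thesis using first s3 by (simp add: from_coords_def sum_UNIV_remove[of _ ?e] algebra_simps)
  next
    case last
    have "(\<Sum>b'\<in>UNIV - {?l}. S (en (xi (a, b', b')))) = (\<Sum>b'\<in>UNIV - {?l}. S (a, b', b'))"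
      using last by (intro sum.cong refl) (simp add: en free_coords_iff)
    moreover have "S (en (xi (?e, ?l, ?l))) = S (?e, ?l, ?l)" using ne by (simp add: en free_coords_iff)
    moreover have "S (?e, ?l, ?l) = S (a, ?l, ?l) + (\<Sum>b\<in>UNIV - {?l}. S (a, b, b))"
      using ta[of a] by (simp add: trace_vec_first_of_shift[OF shift] trace_vec_remove_last[of S a])
    ultimately show ?thesis using last by (simp add: from_coords_def)
  next
    case free
    then show ?thesis using en by (simp add: from_coords_free)
  qed
qed

lemma poly_fun_from_coords:
  fixes xi :: "'n::finite \<times> 'n \<times> 'n \<Rightarrow> nat" and t :: "'n \<times> 'n \<times> 'n"
  assumes n2: "CARD('n) \<ge> 2" and xi: "\<And>t. t \<in> free_coords \<Longrightarrow> xi t \<in> S"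
  shows "poly_fun S (\<lambda>y::nat \<Rightarrow> 'k::field. from_coords xi y t)"
proof -
  let ?l = "last_elem :: 'n" and ?e = "first_elem :: 'n"
  obtain a b c where t: "t = (a,b,c)" by (cases t) auto
  consider (shifted) "a = ?e" "b \<noteq> ?l" | (first) "a = ?e" "b = ?l" "c = ?e"
    | (last) "a \<noteq> ?e" "b = ?l" "c = ?l" | (free) "(a,b,c) \<in> free_coords"
    using free_coords_iff by blast
  then show ?thesis
  proof cases
    case shifted
    then show ?thesis unfolding t by (simp add: from_coords_shift pf_const)
  next
    case first
    have "poly_fun S (\<lambda>y::nat \<Rightarrow> 'k. 1 - (\<Sum>c'\<in>UNIV - {?e}. y (xi (?e, ?l, c'))))"
      by (intro poly_fun_diff pf_const poly_fun_sum pf_var xi) (auto simp: free_coords_iff)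
    then show ?thesis unfolding t using first by (simp only: from_coords_first)
  next
    case last
    have "poly_fun S (\<lambda>y::nat \<Rightarrow> 'k. y (xi (?e, ?l, ?l)) - (\<Sum>b'\<in>UNIV - {?l}. y (xi (a, b', b'))))"
      using last elem_at_first_ne_last[OF n2]
      by (intro poly_fun_diff pf_const poly_fun_sum pf_var xi) (auto simp: free_coords_iff)
    then show ?thesis unfolding t using last by (simp add: from_coords_last)
  next
    case free
    then show ?thesis unfolding t by (simp add: from_coords_free pf_var xi)
  qed
qed


text \<open>\<open>T(e\<^sub>0, e\<^sub>k) = e\<^sub>k\<^sub>+\<^sub>1\<close>, \<open>T(e\<^sub>0, e\<^sub>n\<^sub>-\<^sub>1) = e\<^sub>n\<^sub>-\<^sub>1\<close> and \<open>T(e\<^sub>a, e\<^sub>a) = e\<^sub>a\<close>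
  otherwise: then \<open>t = (1, \<dots>, 1)\<close> and \<open>B\<close> is invertible.\<close>
definition example_tensor :: "('k::field,'n::finite) tensor" where
  "example_tensor = (\<lambda>(a,b,c). if a = first_elem then (if b \<noteq> last_elem then (if c = elem_at (pos_of b + 1) then 1 else 0)
                     else (if c = last_elem then 1 else 0))
                   else (if b = a \<and> c = a then 1 else 0))"

lemma trace_vec_example:
  assumes n2: "CARD('n::finite) \<ge> 2"
  shows "trace_vec (example_tensor :: ('k::field,'n) tensor) $ a = 1"
proof -
  let ?E = "example_tensor :: ('k,'n) tensor" and ?l = "last_elem :: 'n" and ?e = "first_elem :: 'n"
  have ne: "?e \<noteq> ?l" by (rule elem_at_first_ne_last[OF n2])
  show ?thesis
  proof (cases "a = ?e")
    case True
    have "trace_vec ?E $ a = example_tensor (?e, ?l, ?l) + (\<Sum>b\<in>UNIV - {?l}. ?E (?e, b, b))"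
      unfolding trace_vec_def using True by (simp add: sum_UNIV_remove[of _ ?l])
    also have "(\<Sum>b\<in>UNIV - {?l}. ?E (?e, b, b)) = 0"
    proof (intro sum.neutral ballI)
      fix b assume "b \<in> UNIV - {?l}"
      then have bl: "b \<noteq> ?l" by simp
      show "?E (?e, b, b) = 0" using elem_at_succ_ne[OF bl] bl
        by (simp add: example_tensor_def)
    qed
    finally show ?thesis by (simp add: example_tensor_def)
  next
    case False
    have "trace_vec ?E $ a = (\<Sum>b\<in>UNIV. ?E (a,b,b))"
      by (simp add: trace_vec_def)
    also have "\<dots> = (\<Sum>b\<in>UNIV. if b = a then 1 else 0)"
      by (intro sum.cong refl) (simp add: example_tensor_def False)
    finally show ?thesis by simp
  qed
qed

lemma normalized_example:
  assumes n2: "CARD('n::finite) \<ge> 2"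
  shows "normalized (example_tensor :: ('k::field,'n) tensor)"
proof -
  let ?E = "example_tensor :: ('k,'n) tensor" and ?l = "last_elem :: 'n" and ?e = "first_elem :: 'n"
  have c1: "\<forall>k<CARD('n)-1. \<forall>c. ?E(?e, elem_at k, c) = (if c = elem_at (k+1) then 1 else 0)"
  proof (intro allI impI)
    fix k c assume k: "k < CARD('n) - 1"
    then have "elem_at k \<noteq> ?l" using elem_at_eq_iff[where 'n='n, of k "CARD('n) - 1"] by auto
    moreover have "pos_of (elem_at k :: 'n) = k" using k by (intro pos_of_elem_at) simp
    ultimately show "?E(?e, elem_at k, c) = (if c = elem_at (k+1) then 1 else 0)"
      by (simp add: example_tensor_def)
  qed
  have s3: "(\<Sum>c\<in>UNIV. ?E(?e, ?l, c)) = 1"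
  proof -
    have "(\<Sum>c\<in>UNIV. ?E(?e, ?l, c)) = (\<Sum>c\<in>UNIV. if c = ?l then 1 else 0)"
      by (intro sum.cong refl) (simp add: example_tensor_def)
    then show ?thesis by simp
  qed
  have "\<forall>a. trace_vec ?E $ a = trace_vec ?E $ ?e"
    by (intro allI) (simp add: trace_vec_example[OF n2])
  then show ?thesis unfolding normalized_def using c1 s3 by blast
qed

lemma trace_form_example:
  assumes n2: "CARD('n::finite) \<ge> 2"
  shows "trace_form (example_tensor :: ('k::field,'n) tensor) $ a $ b = (if a = first_elem then 1 else if b = a then 1 else 0)"
proof -
  let ?E = "example_tensor :: ('k,'n) tensor" and ?l = "last_elem :: 'n" and ?e = "first_elem :: 'n"
  have "trace_form ?E $ a $ b = (\<Sum>c\<in>UNIV. ?E(a,b,c))"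
    by (simp add: trace_form_def trace_vec_example[OF n2])
  also have "\<dots> = (if a = first_elem then 1 else if b = a then 1 else 0)"
  proof (cases "a = ?e")
    case True
    show ?thesis
    proof (cases "b = ?l")
      case T2: True
      have "(\<Sum>c\<in>UNIV. ?E(a,b,c)) = (\<Sum>c\<in>UNIV. if c = ?l then 1 else 0)"
        by (intro sum.cong refl) (simp add: example_tensor_def T2 True)
      then show ?thesis using \<open>a = ?e\<close> by simp
    next
      case F2: False
      have "(\<Sum>c\<in>UNIV. ?E(a,b,c)) = (\<Sum>c::'n\<in>UNIV. if c = elem_at (pos_of b + 1) then 1 else 0)"
        by (intro sum.cong refl) (simp add: example_tensor_def F2[simplified] True)
      then show ?thesis using \<open>a = ?e\<close> by simp
    qed
  next
    case False
    have "(\<Sum>c\<in>UNIV. ?E(a,b,c)) = (\<Sum>c\<in>UNIV. if c = a then (if b = a then 1 else 0) else 0)"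
      by (intro sum.cong refl) (auto simp: example_tensor_def False)
    then show ?thesis using False by simp
  qed
  finally show ?thesis .
qed

lemma trace_disc_example:
  assumes n2: "CARD('n::finite) \<ge> 2"
  shows "trace_disc (example_tensor :: ('k::field,'n) tensor) \<noteq> 0"
proof -
  let ?e = "first_elem :: 'n"
  let ?M = "trace_form (example_tensor :: ('k,'n) tensor)"
  define N :: "'k^'n^'n" where "N = (\<chi> i j. if i = ?e then (if j = ?e then 1 else -1) else (if i = j then 1 else 0))"
  have M: "?M $ i $ j = (if i = ?e then 1 else if j = i then 1 else 0)" for i j
    by (rule trace_form_example[OF n2])
  have MN: "(?M ** N) $ i $ j = mat 1 $ i $ j" for i j
  proof (cases "i = ?e")
    case True
    have "(?M ** N) $ i $ j = (\<Sum>k\<in>UNIV. N $ k $ j)" using True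
      by (simp add: matrix_matrix_mult_def M)
    also have "\<dots> = N $ ?e $ j + (\<Sum>k\<in>UNIV - {?e}. N $ k $ j)" by (rule sum_UNIV_remove)
    also have "(\<Sum>k\<in>UNIV - {?e}. N $ k $ j) = (\<Sum>k\<in>UNIV - {?e}. if k = j then 1 else 0)"
      by (intro sum.cong refl) (auto simp: N_def)
    also have "\<dots> = (if j = ?e then 0 else 1)" by (simp add: sum.delta_remove)
    finally show ?thesis using True by (simp add: N_def mat_def)
  next
    case False
    have "(?M ** N) $ i $ j = (\<Sum>k\<in>UNIV. ?M $ i $ k * N $ k $ j)"
      by (simp add: matrix_matrix_mult_def)
    also have "\<dots> = (\<Sum>k\<in>UNIV. (if k = i then 1 else 0) * N $ k $ j)"
      by (intro sum.cong refl) (simp add: M False)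
    also have "\<dots> = N $ i $ j" by (simp add: if_zero_mult mult_if_zero)
    finally show ?thesis using False by (simp add: N_def mat_def)
  qed
  have NM: "(N ** ?M) $ i $ j = mat 1 $ i $ j" for i j
  proof (cases "i = ?e")
    case True
    have "(N ** ?M) $ i $ j = ?M $ ?e $ j + (\<Sum>k\<in>UNIV - {?e}. N $ ?e $ k * ?M $ k $ j)"
      using True by (simp add: matrix_matrix_mult_def sum_UNIV_remove[of _ ?e] N_def)
    also have "(\<Sum>k\<in>UNIV - {?e}. N $ ?e $ k * ?M $ k $ j) = (\<Sum>k\<in>UNIV - {?e}. if k = j then -1 else 0)"
      by (intro sum.cong refl) (auto simp: N_def M)
    also have "\<dots> = (if j = ?e then 0 else -1)" by (simp add: sum.delta_remove)
    finally show ?thesis using True by (simp add: M mat_def)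
  next
    case False
    have "(N ** ?M) $ i $ j = (\<Sum>k\<in>UNIV. N $ i $ k * ?M $ k $ j)"
      by (simp add: matrix_matrix_mult_def)
    also have "\<dots> = (\<Sum>k\<in>UNIV. (if i = k then 1 else 0) * ?M $ k $ j)"
      by (intro sum.cong refl) (simp add: N_def False)
    also have "\<dots> = ?M $ i $ j" by (simp add: if_zero_mult mult_if_zero)
    finally show ?thesis using False by (simp add: M mat_def)
  qed
  have "inverse_mats ?M N" unfolding inverse_mats_def using MN NM by (simp add: vec_eq_iff)
  then show ?thesis unfolding trace_disc_def by (rule inverse_mats_det_nonzero)
qed

lemma generic_example:
  assumes n2: "CARD('n::finite) \<ge> 2"
  shows "generic (example_tensor :: ('k::field,'n) tensor)"
  using generic_of_normalized[OF n2 normalized_example[OF n2] trace_disc_example[OF n2]] .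


lemma from_coords_cong:
  fixes xi :: "'n::finite \<times> 'n \<times> 'n \<Rightarrow> nat"
  assumes n2: "CARD('n) \<ge> 2" and xi: "\<And>t. t \<in> free_coords \<Longrightarrow> xi t \<in> S" and eq: "\<And>i. i \<in> S \<Longrightarrow> y i = y' i"
  shows "(from_coords xi y :: ('k::field,'n) tensor) = from_coords xi y'"
proof
  fix t show "(from_coords xi y :: ('k::field,'n) tensor) t = from_coords xi y' t"
    using poly_fun_cong[OF poly_fun_from_coords[OF n2 xi, where t = t] eq] by simp
qed

lemma poly_fun_act_mats:
  fixes T :: "('v \<Rightarrow> 'k) \<Rightarrow> ('k::field,'n::finite) tensor"
  assumes "\<And>x. poly_fun S (\<lambda>y. T y x)"
  shows "poly_fun S (\<lambda>y. act_mats G H (T y) t)"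
proof -
  obtain i j l where t: "t = (i,j,l)" by (cases t) auto
  show ?thesis unfolding t act_mats_def
    by (simp, intro poly_fun_sum pf_mult pf_const assms) simp_all
qed


section \<open>The invariants\<close>

locale invariant_coordinates =
  fixes N :: nat
    and coord :: "nat \<Rightarrow> 'n::finite \<times> 'n \<times> 'n"
    and D :: "('k::field,'n) tensor \<Rightarrow> 'k"
    and num :: "'n \<times> 'n \<times> 'n \<Rightarrow> ('k,'n) tensor \<Rightarrow> 'k"
    and ex :: "'n \<times> 'n \<times> 'n \<Rightarrow> nat"
  assumes card_ge_2: "CARD('n) \<ge> 2"
    and coord_bij: "bij_betw coord {..<N} free_coords"
    and poly_fun_D: "poly_fun UNIV D"
    and generic_iff_D: "generic T \<longleftrightarrow> D T \<noteq> 0"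
    and poly_fun_num: "poly_fun UNIV (num x)"
    and normal_form_eq: "D T \<noteq> 0 \<Longrightarrow> normal_form T x = num x T / D T ^ ex x"
begin

definition coord_index :: "'n \<times> 'n \<times> 'n \<Rightarrow> nat" where
  "coord_index = inv_into {..<N} coord"

lemma coord_index_less: "t \<in> free_coords \<Longrightarrow> coord_index t \<in> {..<N}"
  using coord_bij unfolding coord_index_def bij_betw_def by (metis inv_into_into)

lemma coord_coord_index: "t \<in> free_coords \<Longrightarrow> coord (coord_index t) = t"
  using coord_bij unfolding coord_index_def bij_betw_def by (metis f_inv_into_f)

lemma coord_free: "i < N \<Longrightarrow> coord i \<in> free_coords"
  using coord_bij unfolding bij_betw_def by auto

lemma coord_index_coord: "i < N \<Longrightarrow> coord_index (coord i) = i"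
  using coord_bij unfolding coord_index_def bij_betw_def by (simp add: inv_into_f_f)

lemma N_eq: "N = CARD('n)^3 - CARD('n)^2"
  using bij_betw_same_card[OF coord_bij] card_free_coords[OF card_ge_2] by simp

lemma N_pos: "N > 0"
proof -
  have "CARD('n)^2 < CARD('n)^3" using card_ge_2 by (simp add: power_strict_increasing)
  then show ?thesis by (simp add: N_eq)
qed

text \<open>The extra factor \<open>D\<close> in the numerator makes the invariant vanish identically off the
  generic locus, where invariance is then trivial.\<close>
definition invariant :: "nat \<Rightarrow> (('k,'n) tensor \<Rightarrow> 'k) \<times> (('k,'n) tensor \<Rightarrow> 'k)" where
  "invariant i = (\<lambda>T. num (coord i) T * D T, \<lambda>T. D T ^ Suc (ex (coord i)))"

definition inv_values :: "('k,'n) tensor \<Rightarrow> nat \<Rightarrow> 'k" where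
  "inv_values m i = fst (invariant i) m / snd (invariant i) m"

lemma invariant_denom_nonzero_iff: "snd (invariant i) T \<noteq> 0 \<longleftrightarrow> D T \<noteq> 0"
  by (auto simp: invariant_def)

lemma invariant_denoms_nonzero_iff: "(\<forall>i<N. snd (invariant i) T \<noteq> 0) \<longleftrightarrow> D T \<noteq> 0"
  using N_pos invariant_denom_nonzero_iff by auto

lemma inv_values_normal_form: "D T \<noteq> 0 \<Longrightarrow> inv_values T i = normal_form T (coord i)"
  by (simp add: inv_values_def invariant_def normal_form_eq)

lemma D_example: "D example_tensor \<noteq> 0"
  using generic_example[OF card_ge_2] generic_iff_D by blast

lemma from_coords_inv_values:
  assumes "D m \<noteq> 0" shows "from_coords coord_index (inv_values m) = normal_form m"
proof -
  have "from_coords coord_index (inv_values m) = from_coords coord_index (\<lambda>i. normal_form m (coord i))"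
    by (rule from_coords_cong[OF card_ge_2 coord_index_less]) (use assms inv_values_normal_form in auto)
  also have "\<dots> = normal_form m"
    using assms generic_iff_D normalized_normal_form[OF card_ge_2]
    by (intro from_coords_coords[OF card_ge_2 _ coord_coord_index]) blast+
  finally show ?thesis .
qed

lemma invariant_is_ratfun: "is_ratfun (invariant i)"
  unfolding is_ratfun_def using D_example
  by (auto simp: invariant_def intro!: pf_mult poly_fun_power poly_fun_num poly_fun_D)

lemma invariant_ratfun_invariant: "invariant_ratfun (invariant i)"
  unfolding invariant_ratfun_iff_act_mats
proof (intro allI impI)
  fix G H :: "'k^'n^'n" and m :: "('k,'n) tensor"
  assume GH: "inverse_mats G H"
  show "fst (invariant i) (act_mats G H m) * snd (invariant i) m
      = fst (invariant i) m * snd (invariant i) (act_mats G H m)"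
  proof (cases "D m = 0")
    case True
    then have "D (act_mats G H m) = 0" using generic_act_mats_iff[OF GH] generic_iff_D by blast
    with True show ?thesis by (simp add: invariant_def)
  next
    case False
    then have "D (act_mats G H m) \<noteq> 0" using generic_act_mats_iff[OF GH] generic_iff_D by blast
    then have "inv_values (act_mats G H m) i = inv_values m i"
      using False normal_form_act_mats[OF GH] generic_iff_D by (simp add: inv_values_normal_form)
    then show ?thesis
      using False \<open>D (act_mats G H m) \<noteq> 0\<close>
      by (simp add: inv_values_def invariant_denom_nonzero_iff field_simps)
  qed
qed

lemma D_nonconstant: "\<not> (\<exists>c. \<forall>m. D m = c)"
proof -
  have "trace_vec ((\<lambda>_. 0) :: ('k,'n) tensor) = 0" by (simp add: trace_vec_def vec_eq_iff)
  then have "\<not> generic ((\<lambda>_. 0) :: ('k,'n) tensor)" by (simp add: generic_def trace_disc_zero)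
  then show ?thesis using D_example generic_iff_D by metis
qed

lemma orbit_eq_iff_inv_values:
  assumes "D a \<noteq> 0" "D b \<noteq> 0"
  shows "orbit a = orbit b \<longleftrightarrow> (\<forall>i<N. inv_values a i = inv_values b i)"
proof -
  have "orbit a = orbit b \<longleftrightarrow> normal_form a = normal_form b"
    using orbit_eq_iff_normal_form assms generic_iff_D by blast
  also have "\<dots> \<longleftrightarrow> (\<forall>i<N. inv_values a i = inv_values b i)"
  proof
    assume "\<forall>i<N. inv_values a i = inv_values b i"
    then have "from_coords coord_index (inv_values a) = from_coords coord_index (inv_values b)"
      by (intro from_coords_cong[OF card_ge_2 coord_index_less]) auto
    then show "normal_form a = normal_form b" using from_coords_inv_values assms by simp
  qed (simp add: inv_values_normal_form assms)
  finally show ?thesis .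
qed

text \<open>Normalized tensors are parametrized polynomially by their free coordinates, and on the
  generic ones the invariants return these coordinates; a polynomial nonvanishing at some point
  therefore survives composition with the invariants.\<close>
lemma inv_values_alg_indep:
  assumes inf: "infinite (UNIV :: 'k set)" and P: "poly_fun {..<N} P" and x: "P x \<noteq> 0"
  shows "\<exists>m. D m \<noteq> 0 \<and> P (inv_values m) \<noteq> 0"
proof -
  define Q where "Q y = D (from_coords coord_index y)" for y
  have Q: "poly_fun {..<N} Q"
    unfolding Q_def
      by (rule poly_fun_compose[OF poly_fun_D poly_fun_from_coords[OF card_ge_2 coord_index_less]])
  have "from_coords coord_index (\<lambda>i. example_tensor (coord i)) = (example_tensor :: ('k,'n) tensor)"
    by (rule from_coords_coords[OF card_ge_2 normalized_example[OF card_ge_2] coord_coord_index])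
  then have "Q (\<lambda>i. example_tensor (coord i)) \<noteq> 0" using D_example by (simp add: Q_def)
  then obtain y where y: "P y \<noteq> 0" "Q y \<noteq> 0" using poly_fun_common_nonzero[OF inf P Q x] by blast
  define m where "m = (from_coords coord_index y :: ('k,'n) tensor)"
  have Dm: "D m \<noteq> 0" using y by (simp add: Q_def m_def)
  then have "generic m" using generic_iff_D by blast
  then have "trace_disc m \<noteq> 0" by (simp add: generic_def)
  then have "normal_form m = m"
    using normal_form_of_normalized[OF card_ge_2 normalized_from_coords[OF card_ge_2]]
      by (simp add: m_def)
  then have "inv_values m i = y i" if "i \<in> {..<N}" for i
    using that Dm by (simp add: inv_values_normal_form m_def from_coords_free coord_free coord_index_coord)
  then have "P (inv_values m) = P y" by (rule poly_fun_cong[OF P])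
  then show ?thesis using Dm y by auto
qed

text \<open>Fix a generic \<open>m\<^sub>1\<close> where \<open>r\<close> is defined. Moving the normal form parametrized by
  \<open>y\<close> back by the Krylov matrix of \<open>m\<^sub>1\<close> gives a polynomial family through \<open>m\<^sub>1\<close> which
  meets every generic orbit; \<open>r\<close> restricted to that family is the required quotient.\<close>
lemma invariant_ratfun_in_inv_values:
  assumes inf: "infinite (UNIV :: 'k set)" and r: "is_ratfun r" "invariant_ratfun r"
  shows "\<exists>A B. poly_fun {..<N} A \<and> poly_fun {..<N} B \<and>
           (\<exists>m. D m \<noteq> 0 \<and> B (inv_values m) \<noteq> 0) \<and>
           (\<forall>m. D m \<noteq> 0 \<longrightarrow> fst r m * B (inv_values m) = snd r m * A (inv_values m))"
proof -
  have num: "poly_fun UNIV (fst r)" and den: "poly_fun UNIV (snd r)" and "\<exists>m. snd r m \<noteq> 0"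
    using r(1) by (auto simp: is_ratfun_def)
  then obtain m1 where m1: "D m1 \<noteq> 0" "snd r m1 \<noteq> 0"
    using poly_fun_common_nonzero[OF inf poly_fun_D den D_example] by blast
  let ?W = "krylov_mat m1" and ?Wi = "matrix_inv (krylov_mat m1)"
  have W: "inverse_mats ?W ?Wi" using m1 generic_iff_D generic_inverse_mats by blast
  define Psi where "Psi y = act_mats ?W ?Wi (from_coords coord_index y :: ('k,'n) tensor)" for y
  have Psi: "poly_fun {..<N} (\<lambda>y. Psi y t)" for t
    unfolding Psi_def
      by (rule poly_fun_act_mats, rule poly_fun_from_coords[OF card_ge_2 coord_index_less])
  have Psi_inv_values:
    "Psi (inv_values m) = act_mats (?W ** matrix_inv (krylov_mat m)) (krylov_mat m ** ?Wi) m"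
    and Psi_inverse_mats: "inverse_mats (?W ** matrix_inv (krylov_mat m)) (krylov_mat m ** ?Wi)"
    if "D m \<noteq> 0" for m
    using that generic_iff_D
    by (simp_all add: Psi_def from_coords_inv_values normal_form_def act_mats_act_mats
        inverse_mats_mult[OF inverse_mats_sym[OF generic_inverse_mats] W])
  define A where "A y = fst r (Psi y)" for y
  define B where "B y = snd r (Psi y)" for y
  have "Psi (inv_values m1) = m1"
    using Psi_inv_values[OF m1(1)] W by (simp add: inverse_mats_def act_mats_id)
  then have "B (inv_values m1) \<noteq> 0" using m1(2) by (simp add: B_def)
  moreover have "fst r m * B (inv_values m) = snd r m * A (inv_values m)" if "D m \<noteq> 0" for m
    using r(2)[unfolded invariant_ratfun_iff_act_mats, rule_format, OF Psi_inverse_mats[OF that], of m]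
    by (simp add: A_def B_def Psi_inv_values[OF that] mult.commute)
  moreover have "poly_fun {..<N} A" "poly_fun {..<N} B"
    unfolding A_def B_def by (rule poly_fun_compose[OF num Psi], rule poly_fun_compose[OF den Psi])
  ultimately show ?thesis using m1(1) by blast
qed

end

lemma invariant_coordinates_exist:
  assumes n2: "CARD('n::finite) \<ge> 2"
  shows "\<exists>coord D num ex. invariant_coordinates (CARD('n)^3 - CARD('n)^2) coord (D :: ('k::field,'n) tensor \<Rightarrow> 'k) num ex"
proof -
  obtain coord where coord: "bij_betw coord {..<CARD('n)^3 - CARD('n)^2} (free_coords :: ('n \<times> 'n \<times> 'n) set)"
    using ex_bij_betw_nat_finite[of "free_coords :: ('n \<times> 'n \<times> 'n) set"]
    by (auto simp: atLeast0LessThan card_free_coords[OF n2])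
  obtain pd kd where pd: "poly_fun UNIV pd" "\<And>T::('k,'n) tensor. trace_disc T \<noteq> 0 \<Longrightarrow> det (krylov_mat T) = pd T / trace_disc T ^ kd"
    using rat_over_det_krylov_mat unfolding rat_over_def by blast
  define D where "D T = trace_disc T * pd T" for T :: "('k,'n) tensor"
  have "\<forall>x. \<exists>p k. poly_fun UNIV p \<and> (\<forall>T. D T \<noteq> 0 \<longrightarrow> normal_form T x = p T / D T ^ k)"
    using rat_over_normal_form[OF pd] unfolding D_def rat_over_def by blast
  then obtain num ex where "\<And>x. poly_fun UNIV (num x)"
    "\<And>x T. D T \<noteq> 0 \<Longrightarrow> normal_form T x = num x T / D T ^ ex x"
    by metis
  moreover have "generic T \<longleftrightarrow> D T \<noteq> 0" for T
    using pd(2) by (auto simp: generic_def D_def)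
  moreover have "poly_fun UNIV D" unfolding D_def by (intro pf_mult poly_fun_trace_disc pd)
  ultimately have "invariant_coordinates (CARD('n)^3 - CARD('n)^2) coord D num ex"
    using n2 coord by unfold_locales auto
  then show ?thesis by blast
qed

lemma generic_invariants:
  assumes alg: "alg_closed_field TYPE('k::field)" and n2: "CARD('n::finite) \<ge> 2"
  shows "\<exists>(f :: nat \<Rightarrow> (('k,'n) tensor \<Rightarrow> 'k) \<times> (('k,'n) tensor \<Rightarrow> 'k))
        (h :: nat \<Rightarrow> ('k,'n) tensor \<Rightarrow> 'k) (K :: nat).
        let N = CARD('n)^3 - CARD('n)^2;
            U = {m. \<forall>j<K. h j m \<noteq> 0};
            val = (\<lambda>m i. fst (f i) m / snd (f i) m)
        in
        (\<forall>i<N. is_ratfun (f i) \<and> invariant_ratfun (f i)) \<and>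
        (\<forall>P. poly_fun {..<N} P \<and> (\<exists>x. P x \<noteq> 0) \<longrightarrow>
             (\<exists>m. (\<forall>i<N. snd (f i) m \<noteq> 0) \<and> P (val m) \<noteq> 0)) \<and>
        (\<forall>j<K. poly_fun UNIV (h j) \<and> \<not> (\<exists>c. \<forall>m. h j m = c)) \<and>
        (\<forall>i<N. \<forall>m\<in>U. snd (f i) m \<noteq> 0) \<and>
        (\<forall>a\<in>U. \<forall>b\<in>U. orbit a = orbit b \<longleftrightarrow> (\<forall>i<N. val a i = val b i)) \<and>
        (\<forall>r. is_ratfun r \<and> invariant_ratfun r \<longrightarrow>
           (\<exists>A B. poly_fun {..<N} A \<and> poly_fun {..<N} B \<and>
              (\<exists>m. (\<forall>i<N. snd (f i) m \<noteq> 0) \<and> B (val m) \<noteq> 0) \<and>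
              (\<forall>m. (\<forall>i<N. snd (f i) m \<noteq> 0) \<longrightarrow>
                   fst r m * B (val m) = snd r m * A (val m))))"
proof -
  define N where "N = CARD('n)^3 - CARD('n)^2"
  obtain coord D num ex where "invariant_coordinates N coord (D :: ('k,'n) tensor \<Rightarrow> 'k) num ex"
    using invariant_coordinates_exist[OF n2] unfolding N_def by blast
  then interpret invariant_coordinates N coord D num ex .
  have inf: "infinite (UNIV :: 'k set)" by (rule alg_closed_field_infinite[OF alg])
  have val: "(\<lambda>i. fst (invariant i) m / snd (invariant i) m) = inv_values m" for m
    by (simp add: inv_values_def fun_eq_iff)
  show ?thesis
    apply (intro exI[of _ invariant] exI[of _ "\<lambda>_. D"] exI[of _ 1])
    apply (simp only: Let_def N_def[symmetric] val invariant_denoms_nonzero_iff)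
    using invariant_is_ratfun invariant_ratfun_invariant inv_values_alg_indep[OF inf]
      poly_fun_D D_nonconstant invariant_denom_nonzero_iff orbit_eq_iff_inv_values
      invariant_ratfun_in_inv_values[OF inf]
    by auto
qed


section \<open>Dimension one\<close>

lemma act_mats_mat_inverse:
  fixes T :: "('k::field,'n::finite) tensor"
  shows "act_mats (mat (inverse s)) (mat s) T = (\<lambda>x. s * T x)"
  unfolding act_mats_mat by (cases "s = 0") (simp_all add: fun_eq_iff)

lemma scaled_in_orbit:
  fixes T :: "('k::field,'n::finite) tensor"
  shows "s \<noteq> 0 \<Longrightarrow> (\<lambda>x. s * T x) \<in> orbit T"
  using act_mats_in_orbit[OF inverse_mats_mat[of "inverse s"]] by (simp add: act_mats_mat_inverse)

lemma tensor_const_if_card_1: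
  fixes T :: "('k,'n::finite) tensor"
  assumes "CARD('n) = 1" shows "T = (\<lambda>_. T t)"
proof -
  have "card (UNIV :: ('n \<times> 'n \<times> 'n) set) = 1" using assms by (simp add: card_cartesian_product)
  then have "x = t" for x :: "'n \<times> 'n \<times> 'n" by (metis UNIV_I card_1_singletonE singletonD)
  then show ?thesis by auto
qed

lemma orbit_eq_if_card_1:
  fixes a b :: "('k::field,'n::finite) tensor"
  assumes "CARD('n) = 1" "a \<noteq> (\<lambda>_. 0)" "b \<noteq> (\<lambda>_. 0)"
  shows "orbit a = orbit b"
proof -
  fix t
  have a: "a = (\<lambda>_. a t)" and b: "b = (\<lambda>_. b t)" using tensor_const_if_card_1[OF assms(1)] by blast+
  then have "a t \<noteq> 0" "b t \<noteq> 0" using assms(2,3) by metis+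
  then have "(\<lambda>x. (b t / a t) * a x) \<in> orbit a" by (intro scaled_in_orbit) simp
  also have "(\<lambda>x. (b t / a t) * a x) = b" using \<open>a t \<noteq> 0\<close> by (subst (1 2) a, subst b) simp
  finally show ?thesis using orbit_eq_iff by blast
qed

text \<open>On the line \<open>{\<lambda>_. x}\<close>, which is all of \<open>M\<close>, invariance gives
  \<open>p(y) q(x\<^sub>0) = p(x\<^sub>0) q(y)\<close> for all \<open>y \<noteq> 0\<close>, by scaling \<open>x\<^sub>0\<close> to \<open>y\<close>.\<close>
lemma invariant_ratfun_const_if_card_1:
  fixes r :: "(('k::field,'n::finite) tensor \<Rightarrow> 'k) \<times> (('k,'n) tensor \<Rightarrow> 'k)"
  assumes inf: "infinite (UNIV :: 'k set)" and n1: "CARD('n) = 1"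
    and r: "is_ratfun r" "invariant_ratfun r"
  shows "\<exists>c. \<forall>m. fst r m = c * snd r m"
proof -
  fix t
  have const: "m = (\<lambda>_. m t)" for m :: "('k,'n) tensor" by (rule tensor_const_if_card_1[OF n1])
  obtain p where p: "\<forall>x. fst r (\<lambda>i. 0 + x * 1) = poly p x"
    using r(1) poly_fun_on_line[of UNIV "fst r" "\<lambda>_. 0" "\<lambda>_. 1"] by (auto simp: is_ratfun_def)
  obtain q where q: "\<forall>x. snd r (\<lambda>i. 0 + x * 1) = poly q x"
    using r(1) poly_fun_on_line[of UNIV "snd r" "\<lambda>_. 0" "\<lambda>_. 1"] by (auto simp: is_ratfun_def)
  have fst_r: "fst r m = poly p (m t)" and snd_r: "snd r m = poly q (m t)" for m
    using p q const[of m] by (metis add_0 mult_1_right)+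
  obtain m0 where "snd r m0 \<noteq> 0" using r(1) by (auto simp: is_ratfun_def)
  then have "q \<noteq> 0" by (auto simp: snd_r)
  then have "finite (insert 0 {x. poly q x = 0})" by (simp add: poly_roots_finite)
  then obtain x0 where "x0 \<notin> insert 0 {x. poly q x = 0}"
    using inf by (metis (mono_tags, lifting) UNIV_I finite_subset subsetI)
  then have x0: "x0 \<noteq> 0" "poly q x0 \<noteq> 0" by auto
  define c where "c = poly p x0 / poly q x0"
  have "poly p y = c * poly q y" if "y \<noteq> 0" for y
  proof -
    have "y / x0 \<noteq> 0" using that x0 by simp
    then have "inverse_mats (mat (inverse (y / x0))) (mat (y / x0) :: 'k^'n^'n)"
      using inverse_mats_mat[of "inverse (y / x0)"] by simp
    from r(2)[unfolded invariant_ratfun_iff_act_mats, rule_format, OF this, of "\<lambda>_. x0"]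
    have "fst r (\<lambda>_. y) * snd r (\<lambda>_. x0) = fst r (\<lambda>_. x0) * snd r (\<lambda>_. y)"
      using x0 that by (simp add: act_mats_mat power2_eq_square field_simps)
    then show ?thesis using x0 by (simp add: fst_r snd_r c_def field_simps)
  qed
  then have "UNIV - {0} \<subseteq> {x. poly (p - smult c q) x = 0}" by auto
  moreover have "infinite (UNIV - {0::'k})" using inf by simp
  ultimately have "p - smult c q = 0" using poly_roots_finite finite_subset by blast
  then show ?thesis by (auto simp: fst_r snd_r)
qed

theorem corollary1:

  assumes "alg_closed_field TYPE('k::field)"
    and "(2::'k) \<noteq> 0"
  shows
   "(CARD('n::finite) \<ge> 2 \<longrightarrow>
      (\<exists>(f :: nat \<Rightarrow> (('k,'n) tensor \<Rightarrow> 'k) \<times> (('k,'n) tensor \<Rightarrow> 'k))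
        (h :: nat \<Rightarrow> ('k,'n) tensor \<Rightarrow> 'k) (K :: nat).
        let N = CARD('n)^3 - CARD('n)^2;
            U = {m. \<forall>j<K. h j m \<noteq> 0};
            val = (\<lambda>m i. fst (f i) m / snd (f i) m)
        in
        \<comment> \<open>the f_i are G-invariant rational functions\<close>
        (\<forall>i<N. is_ratfun (f i) \<and> invariant_ratfun (f i)) \<and>
        \<comment> \<open>algebraically independent over k\<close>
        (\<forall>P. poly_fun {..<N} P \<and> (\<exists>x. P x \<noteq> 0) \<longrightarrow>
             (\<exists>m. (\<forall>i<N. snd (f i) m \<noteq> 0) \<and> P (val m) \<noteq> 0)) \<and>
        \<comment> \<open>the h_j are nonconstant polynomial functions\<close>
        (\<forall>j<K. poly_fun UNIV (h j) \<and> \<not> (\<exists>c. \<forall>m. h j m = c)) \<and>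
        \<comment> \<open>(i): the f_i are defined on U and separate G-orbits in U\<close>
        (\<forall>i<N. \<forall>m\<in>U. snd (f i) m \<noteq> 0) \<and>
        (\<forall>a\<in>U. \<forall>b\<in>U. orbit a = orbit b \<longleftrightarrow> (\<forall>i<N. val a i = val b i)) \<and>
        \<comment> \<open>(ii): every G-invariant rational function lies in k(f_i)\<close>
        (\<forall>r. is_ratfun r \<and> invariant_ratfun r \<longrightarrow>
           (\<exists>A B. poly_fun {..<N} A \<and> poly_fun {..<N} B \<and>
              (\<exists>m. (\<forall>i<N. snd (f i) m \<noteq> 0) \<and> B (val m) \<noteq> 0) \<and>
              (\<forall>m. (\<forall>i<N. snd (f i) m \<noteq> 0) \<longrightarrow>
                   fst r m * B (val m) = snd r m * A (val m)))))) \<and>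
    (CARD('n) = 1 \<longrightarrow>
      (\<forall>r :: (('k,'n) tensor \<Rightarrow> 'k) \<times> (('k,'n) tensor \<Rightarrow> 'k).
          is_ratfun r \<and> invariant_ratfun r \<longrightarrow> (\<exists>c. \<forall>m. fst r m = c * snd r m)) \<and>
      (\<forall>a b :: ('k,'n) tensor. a \<noteq> (\<lambda>_. 0) \<and> b \<noteq> (\<lambda>_. 0) \<longrightarrow> orbit a = orbit b))"
  using alg_closed_field_infinite[OF assms(1)]
  apply (intro conjI impI)
    apply (erule generic_invariants[OF assms(1)])
   apply (blast intro: invariant_ratfun_const_if_card_1)
  apply (simp add: orbit_eq_if_card_1)
  done

end
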